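(* Let $\boldsymbol\varphi\in\mathcal{OB}$ and let $g_{\boldsymbol\varphi}$ be a product metric with associated component operators $\mathcal G_{\boldsymbol\varphi,j}:H^1_0(\mathcal D,\mathbb C)\to H^{-1}(\mathcal D,\mathbb C)$. Then $g_{\boldsymbol\varphi}$ is horizontally compatible with the $L$-metric at $\boldsymbol\varphi$, i.e. $\mathcal H^g_{\boldsymbol\varphi}=\mathcal H^L_{\boldsymbol\varphi}$, if and only if for every $j=1,\dots,p$ the function $i\varphi_j$ is an eigenfunction of $\mathcal G_{\boldsymbol\varphi,j}$ on $T_{\varphi_j}\mathcal S_{N_j}$ to a nonzero real eigenvalue, i.e. there is $\varsigma_j\in\mathbb R\setminus\{0\}$ with $\langle\mathcal G_{\boldsymbol\varphi,j}(i\varphi_j),z\rangle=\varsigma_j\,\mathrm{Re}\int_{\mathcal D}i\varphi_j\overline z\,dx$ for all $z\in T_{\varphi_j}\mathcal S_{N_j}$.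
   Context: $\mathcal D\subset\mathbb R^d$ bounded Lipschitz, $d\in\{2,3\}$; $H=[H^1_0(\mathcal D,\mathbb C)]^p$ real Hilbert space, $\langle\cdot,\cdot\rangle$ the real duality pairing between $H^{-1}$ and $H^1_0$. $N_j>0$; $\mathcal S_{N_j}=\{\varphi\in H^1_0(\mathcal D,\mathbb C):\int|\varphi|^2=N_j\}$, $T_{\varphi}\mathcal S_{N_j}=\{z:\mathrm{Re}\int z\overline\varphi=0\}$; $\mathcal{OB}=\mathcal S_{N_1}\times\dots\times\mathcal S_{N_p}$, $T_{\boldsymbol\varphi}\mathcal{OB}=\prod_jT_{\varphi_j}\mathcal S_{N_j}$. Vertical space $\mathcal V_{\boldsymbol\varphi}=\{i\boldsymbol\varphi\Sigma:\Sigma\text{ real diagonal}\}=\{(i\varphi_1\sigma_1,\dots,i\varphi_p\sigma_p):\sigma_j\in\mathbb R\}$. For a Riemannian metric $g_{\boldsymbol\varphi}$ (an inner product on $T_{\boldsymbol\varphi}\mathcal{OB}$), $\mathcal H^g_{\boldsymbol\varphi}=\{\boldsymbol\xi\in T_{\boldsymbol\varphi}\mathcal{OB}:g_{\boldsymbol\varphi}(\boldsymbol\xi,\boldsymbol\nu)=0\ \forall\boldsymbol\nu\in\mathcal V_{\boldsymbol\varphi}\}$; for the $L$-metric $g_L(\mathbf y,\mathbf z)=\sum_j\mathrm{Re}\int y_j\overline{z_j}$ this is $\mathcal H^L_{\boldsymbol\varphi}=\{\boldsymbol\xi\in H:\int\varphi_j\overline{\xi_j}\,dx=0\in\mathbb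 C\ \forall j\}$. A product metric here is one defined on all of $H$ of the form $g_{\boldsymbol\varphi}(\mathbf y,\mathbf z)=\sum_j\langle\mathcal G_{\boldsymbol\varphi,j}y_j,z_j\rangle$ with linear $\mathcal G_{\boldsymbol\varphi,j}:H^1_0(\mathcal D,\mathbb C)\to H^{-1}(\mathcal D,\mathbb C)$. *)

theory Defs
  imports "HOL-Analysis.Analysis"
begin

type_synonym 'n cfun = "real^'n \<Rightarrow> complex"

definition lipschitz_domain :: "(real^'n) set \<Rightarrow> bool" where
  "lipschitz_domain D \<longleftrightarrow> open D \<and> bounded D \<and> D \<noteq> {} \<and>
     (\<forall>x0\<in>frontier D. \<exists>r>0. \<exists>T k C (\<gamma>::real^'n \<Rightarrow> real).
        orthogonal_transformation T \<and> lipschitz_on C UNIV \<gamma> \<and>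
        (\<forall>y z. (\<forall>i. i \<noteq> k \<longrightarrow> y$i = z$i) \<longrightarrow> \<gamma> y = \<gamma> z) \<and>
        (\<forall>x\<in>ball x0 r. x \<in> D \<longleftrightarrow> (T (x - x0))$k < \<gamma> (T (x - x0))))"

definition pderiv_fun :: "'n::finite \<Rightarrow> 'n cfun \<Rightarrow> 'n cfun" where
  "pderiv_fun i f = (\<lambda>x. frechet_derivative f (at x) (axis i 1))"

text \<open>C-infinity functions: f lies in a family closed under partial differentiation,
  all of whose members are differentiable everywhere.\<close>
definition smooth_fun :: "('n::finite) cfun \<Rightarrow> bool" where
  "smooth_fun f \<longleftrightarrow> (\<exists>F. f \<in> F \<and> (\<forall>g\<in>F. g differentiable_on UNIV \<and>
       (\<forall>i. pderiv_fun i g \<in> F)))"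

definition test_fun :: "(real^'n::finite) set \<Rightarrow> 'n cfun \<Rightarrow> bool" where
  "test_fun D \<psi> \<longleftrightarrow> smooth_fun \<psi> \<and> compact (closure {x. \<psi> x \<noteq> 0})
      \<and> closure {x. \<psi> x \<noteq> 0} \<subseteq> D"

definition sq_norm_L2 :: "(real^'n::finite) set \<Rightarrow> 'n cfun \<Rightarrow> real" where
  "sq_norm_L2 D u = (LINT x:D|lborel. (cmod (u x))\<^sup>2)"

definition in_L2 :: "(real^'n::finite) set \<Rightarrow> 'n cfun \<Rightarrow> bool" where
  "in_L2 D u \<longleftrightarrow> set_borel_measurable lborel D u \<and>
      set_integrable lborel D (\<lambda>x. (cmod (u x))\<^sup>2)"

definition L2ip :: "(real^'n::finite) set \<Rightarrow> 'n cfun \<Rightarrow> 'n cfun \<Rightarrow> complex" where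
  "L2ip D y z = (LINT x:D|lborel. y x * cnj (z x))"

definition weak_deriv :: "(real^'n::finite) set \<Rightarrow> 'n cfun \<Rightarrow> 'n \<Rightarrow> 'n cfun \<Rightarrow> bool" where
  "weak_deriv D u i v \<longleftrightarrow> in_L2 D v \<and>
     (\<forall>\<psi>. test_fun D \<psi> \<longrightarrow>
        (LINT x:D|lborel. u x * pderiv_fun i \<psi> x) = - (LINT x:D|lborel. v x * \<psi> x))"

definition in_H1 :: "(real^'n::finite) set \<Rightarrow> 'n cfun \<Rightarrow> bool" where
  "in_H1 D u \<longleftrightarrow> in_L2 D u \<and> (\<forall>i. \<exists>v. weak_deriv D u i v)"

definition wgrad :: "(real^'n::finite) set \<Rightarrow> 'n cfun \<Rightarrow> 'n \<Rightarrow> 'n cfun" where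
  "wgrad D u i = (SOME v. weak_deriv D u i v)"

definition H1norm :: "(real^'n::finite) set \<Rightarrow> 'n cfun \<Rightarrow> real" where
  "H1norm D u = sqrt (sq_norm_L2 D u + (\<Sum>i\<in>UNIV. sq_norm_L2 D (wgrad D u i)))"

text \<open>H^1_0(D,C): closure of C_c^infinity(D) in the H^1 norm.\<close>
definition H10 :: "(real^'n::finite) set \<Rightarrow> 'n cfun set" where
  "H10 D = {u. in_H1 D u \<and> (\<exists>\<psi>s. (\<forall>n. test_fun D (\<psi>s n)) \<and>
              (\<lambda>n. H1norm D (\<lambda>x. u x - \<psi>s n x)) \<longlonglongrightarrow> 0)}"

section \<open>Product space H = [H^1_0]^p, components indexed by j < p\<close>

definition Hp :: "(real^'n::finite) set \<Rightarrow> nat \<Rightarrow> (nat \<Rightarrow> 'n cfun) set" where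
  "Hp D p = {\<xi>. (\<forall>j<p. \<xi> j \<in> H10 D) \<and> (\<forall>j\<ge>p. \<xi> j = (\<lambda>x. 0))}"

definition sphereS :: "(real^'n::finite) set \<Rightarrow> real \<Rightarrow> 'n cfun set" where
  "sphereS D N = {u \<in> H10 D. sq_norm_L2 D u = N}"

definition tangentS :: "(real^'n::finite) set \<Rightarrow> 'n cfun \<Rightarrow> 'n cfun set" where
  "tangentS D \<phi> = {z \<in> H10 D. Re (L2ip D z \<phi>) = 0}"

definition OB :: "(real^'n::finite) set \<Rightarrow> nat \<Rightarrow> (nat \<Rightarrow> real) \<Rightarrow> (nat \<Rightarrow> 'n cfun) set" where
  "OB D p N = {\<phi> \<in> Hp D p. \<forall>j<p. \<phi> j \<in> sphereS D (N j)}"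

definition tangentOB :: "(real^'n::finite) set \<Rightarrow> nat \<Rightarrow> (nat \<Rightarrow> 'n cfun) \<Rightarrow> (nat \<Rightarrow> 'n cfun) set" where
  "tangentOB D p \<phi> = {\<xi> \<in> Hp D p. \<forall>j<p. \<xi> j \<in> tangentS D (\<phi> j)}"

text \<open>Vertical space  { i phi Sigma : Sigma real diagonal }\<close>
definition vertical :: "nat \<Rightarrow> (nat \<Rightarrow> 'n cfun) \<Rightarrow> (nat \<Rightarrow> 'n cfun) set" where
  "vertical p \<phi> = {\<nu>. \<exists>\<sigma>::nat \<Rightarrow> real.
      \<nu> = (\<lambda>j. if j < p then (\<lambda>x. \<i> * \<phi> j x * complex_of_real (\<sigma> j)) else (\<lambda>x. 0))}"

text \<open>Gp j y z stands for the real duality pairing  < G_{phi,j} y, z >.\<close>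
definition prod_metric :: "nat \<Rightarrow> (nat \<Rightarrow> 'n cfun \<Rightarrow> 'n cfun \<Rightarrow> real)
      \<Rightarrow> (nat \<Rightarrow> 'n cfun) \<Rightarrow> (nat \<Rightarrow> 'n cfun) \<Rightarrow> real" where
  "prod_metric p Gp y z = (\<Sum>j<p. Gp j (y j) (z j))"

text \<open>G : H^1_0 -> H^{-1} (real-)linear, with values bounded real-linear functionals.\<close>
definition H10_to_Hm1_linear :: "(real^'n::finite) set \<Rightarrow> ('n cfun \<Rightarrow> 'n cfun \<Rightarrow> real) \<Rightarrow> bool" where
  "H10_to_Hm1_linear D G \<longleftrightarrow>
     (\<forall>y\<in>H10 D. \<forall>y'\<in>H10 D. \<forall>a b::real. \<forall>z\<in>H10 D.
         G (\<lambda>x. a * y x + b * y' x) z = a * G y z + b * G y' z) \<and>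
     (\<forall>y\<in>H10 D. (\<forall>z\<in>H10 D. \<forall>z'\<in>H10 D. \<forall>a b::real.
         G y (\<lambda>x. a * z x + b * z' x) = a * G y z + b * G y z') \<and>
       (\<exists>C. \<forall>z\<in>H10 D. \<bar>G y z\<bar> \<le> C * H1norm D z))"

text \<open>A product metric at phi: the component operators are linear H^1_0 -> H^{-1}
  and g_phi is an inner product (symmetric, positive definite) on T_phi OB
  (definiteness modulo null functions, i.e. elements of the Hilbert space).\<close>
definition is_product_metric :: "(real^'n::finite) set \<Rightarrow> nat \<Rightarrow> (nat \<Rightarrow> 'n cfun)
      \<Rightarrow> (nat \<Rightarrow> 'n cfun \<Rightarrow> 'n cfun \<Rightarrow> real) \<Rightarrow> bool" where
  "is_product_metric D p \<phi> Gp \<longleftrightarrow>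
     (\<forall>j<p. H10_to_Hm1_linear D (Gp j)) \<and>
     (\<forall>y\<in>tangentOB D p \<phi>. \<forall>z\<in>tangentOB D p \<phi>. prod_metric p Gp y z = prod_metric p Gp z y) \<and>
     (\<forall>\<xi>\<in>tangentOB D p \<phi>. (\<exists>j<p. sq_norm_L2 D (\<xi> j) \<noteq> 0) \<longrightarrow> prod_metric p Gp \<xi> \<xi> > 0)"

definition horizontal_g :: "(real^'n::finite) set \<Rightarrow> nat \<Rightarrow> (nat \<Rightarrow> 'n cfun)
      \<Rightarrow> (nat \<Rightarrow> 'n cfun \<Rightarrow> 'n cfun \<Rightarrow> real) \<Rightarrow> (nat \<Rightarrow> 'n cfun) set" where
  "horizontal_g D p \<phi> Gp = {\<xi> \<in> tangentOB D p \<phi>. \<forall>\<nu>\<in>vertical p \<phi>. prod_metric p Gp \<xi> \<nu> = 0}"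

definition horizontal_L :: "(real^'n::finite) set \<Rightarrow> nat \<Rightarrow> (nat \<Rightarrow> 'n cfun) \<Rightarrow> (nat \<Rightarrow> 'n cfun) set" where
  "horizontal_L D p \<phi> = {\<xi> \<in> Hp D p. \<forall>j<p. L2ip D (\<phi> j) (\<xi> j) = 0}"

end

theory Submission
  imports Defs "HOL-Computational_Algebra.Polynomial" "HOL-Real_Asymp.Real_Asymp"
begin

(* Both horizontal spaces are cut out of T_phi OB componentwise, by one real-linear functional
   per component on T_{phi_j} S_{N_j}. For g this is z |-> G_j(i phi_j, z): the vertical vectors
   are (i phi_j sigma_j)_j and g is symmetric. For the L-metric it is z |-> Re <i phi_j, z>_L2,
   because <phi_j, z> = 0 iff its real part (tangency) and its imaginary part vanish. Both
   functionals are nonzero at i phi_j, and two such functionals have the same kernel iff they are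
   proportional.
   The analytic work is to show that H^1_0(D), defined via an arbitrarily chosen weak gradient,
   is closed under complex linear combinations. This needs uniqueness of weak derivatives, i.e.
   the fundamental lemma of the calculus of variations, for which smooth bumps approximating the
   indicator of a box are built from s |-> exp(-1/s). *)

section \<open>A smooth function of one variable that is flat at the origin\<close>

lemma poly_over_exp_tendsto_0: "((\<lambda>u::real. poly P u / exp u) \<longlongrightarrow> 0) at_top"
proof -
  have "((\<lambda>u. \<Sum>i\<le>degree P. coeff P i * (u ^ i / exp u)) \<longlongrightarrow> (\<Sum>i\<le>degree P. coeff P i * 0)) at_top"
    by (intro tendsto_sum tendsto_mult tendsto_const tendsto_power_div_exp_0)
  then show ?thesis
    by (simp add: poly_altdef sum_divide_distrib)
qed

definition flat :: "real poly \<Rightarrow> real \<Rightarrow> real" where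
  "flat P s = (if s > 0 then poly P (inverse s) * exp (- inverse s) else 0)"

definition flat_pderiv :: "real poly \<Rightarrow> real poly" where
  "flat_pderiv P = [:0, 0, 1:] * (P - pderiv P)"

lemma flat_has_real_derivative_pos:
  assumes "s > 0"
  shows "(flat P has_real_derivative flat (flat_pderiv P) s) (at s)"
proof -
  have "((\<lambda>s. poly P (inverse s) * exp (- inverse s)) has_real_derivative
      poly (pderiv P) (inverse s) * (- (inverse s)\<^sup>2) * exp (- inverse s)
        + poly P (inverse s) * (exp (- inverse s) * (inverse s)\<^sup>2)) (at s)"
    using assms by (auto intro!: derivative_eq_intros simp: power2_eq_square)
  moreover have "poly (pderiv P) (inverse s) * (- (inverse s)\<^sup>2) * exp (- inverse s)
        + poly P (inverse s) * (exp (- inverse s) * (inverse s)\<^sup>2) = flat (flat_pderiv P) s"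
    using assms by (simp add: flat_def flat_pderiv_def algebra_simps power2_eq_square)
  ultimately have "((\<lambda>s. poly P (inverse s) * exp (- inverse s)) has_real_derivative
      flat (flat_pderiv P) s) (at s)"
    by simp
  then show ?thesis
    by (rule has_field_derivative_transform_within_open[where S = "{0<..}"])
       (use assms in \<open>auto simp: flat_def\<close>)
qed

lemma flat_has_real_derivative_0: "(flat P has_real_derivative flat (flat_pderiv P) 0) (at 0)"
proof -
  have "((\<lambda>y. (flat P y - flat P 0) / (y - 0)) \<longlongrightarrow> 0) (at 0)"
  proof (rule filterlim_split_at_real)
    have "eventually (\<lambda>y. 0 = (flat P y - flat P 0) / (y - 0)) (at_left 0)"
      by (auto simp: eventually_at_left_field flat_def intro!: exI[of _ "-1"])
    then show "((\<lambda>y. (flat P y - flat P 0) / (y - 0)) \<longlongrightarrow> 0) (at_left 0)"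
      by (rule Lim_transform_eventually[OF tendsto_const])
  next
    have "((\<lambda>y. poly (pCons 0 P) (inverse y) / exp (inverse y)) \<longlongrightarrow> 0) (at_right 0)"
      by (rule filterlim_compose[OF poly_over_exp_tendsto_0 filterlim_inverse_at_top_right])
    moreover have "eventually (\<lambda>y. poly (pCons 0 P) (inverse y) / exp (inverse y)
        = (flat P y - flat P 0) / (y - 0)) (at_right 0)"
      by (auto simp: eventually_at_right_field flat_def exp_minus divide_inverse intro!: exI[of _ 1])
    ultimately show "((\<lambda>y. (flat P y - flat P 0) / (y - 0)) \<longlongrightarrow> 0) (at_right 0)"
      by (rule Lim_transform_eventually)
  qed
  then show ?thesis
    by (simp add: has_field_derivative_iff flat_def)
qed

lemma flat_has_real_derivative: "(flat P has_real_derivative flat (flat_pderiv P) s) (at s)"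
proof (cases "s < 0")
  case True
  have "((\<lambda>s. 0) has_real_derivative flat (flat_pderiv P) s) (at s)"
    using True by (simp add: flat_def)
  then show ?thesis
    by (rule has_field_derivative_transform_within_open[where S = "{..<0}"])
       (use True in \<open>auto simp: flat_def\<close>)
qed (use flat_has_real_derivative_pos flat_has_real_derivative_0 in \<open>cases "s = 0"; auto\<close>)

lemma deriv_flat: "deriv (flat P) = flat (flat_pderiv P)"
  by (intro ext DERIV_imp_deriv flat_has_real_derivative)

lemma flat_1_bounds: "0 \<le> flat 1 s" "flat 1 s \<le> 1"
  by (auto simp: flat_def)

lemma flat_1_tendsto_1: "(flat 1 \<longlongrightarrow> 1) at_top"
proof -
  have "((\<lambda>s. exp (- inverse s)) \<longlongrightarrow> exp (- 0)) (at_top :: real filter)"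
    by (intro tendsto_intros tendsto_inverse_0_at_top filterlim_ident)
  moreover have "eventually (\<lambda>s. exp (- inverse s) = flat 1 s) (at_top :: real filter)"
    using eventually_gt_at_top[of 0] by eventually_elim (simp add: flat_def)
  ultimately show ?thesis
    by (simp add: Lim_transform_eventually)
qed

fun Ck :: "nat \<Rightarrow> (real \<Rightarrow> real) \<Rightarrow> bool" where
  "Ck 0 f = True"
| "Ck (Suc k) f = ((\<forall>x. f differentiable (at x)) \<and> Ck k (deriv f))"

lemma Ck_SucD: "Ck (Suc k) f \<Longrightarrow> Ck k f"
  by (induction k arbitrary: f) auto

lemma Ck_const: "Ck k (\<lambda>x. c)"
  by (induction k arbitrary: c) (auto simp: deriv_const)

lemma Ck_add: "Ck k f \<Longrightarrow> Ck k g \<Longrightarrow> Ck k (\<lambda>x. f x + g x)"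
proof (induction k arbitrary: f g)
  case (Suc k)
  then have "\<And>x. (f has_real_derivative deriv f x) (at x)" "\<And>x. (g has_real_derivative deriv g x) (at x)"
    by (auto simp: DERIV_deriv_iff_real_differentiable)
  then have "deriv (\<lambda>x. f x + g x) = (\<lambda>x. deriv f x + deriv g x)"
    by (intro ext DERIV_imp_deriv DERIV_add)
  with Suc show ?case
    by auto
qed simp

lemma Ck_mult: "Ck k f \<Longrightarrow> Ck k g \<Longrightarrow> Ck k (\<lambda>x. f x * g x)"
proof (induction k arbitrary: f g)
  case (Suc k)
  then have "\<And>x. (f has_real_derivative deriv f x) (at x)" "\<And>x. (g has_real_derivative deriv g x) (at x)"
    by (auto simp: DERIV_deriv_iff_real_differentiable)
  then have "deriv (\<lambda>x. f x * g x) = (\<lambda>x. deriv f x * g x + f x * deriv g x)"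
    by (intro ext DERIV_imp_deriv) (auto intro!: derivative_eq_intros)
  moreover have "Ck k (\<lambda>x. deriv f x * g x + f x * deriv g x)"
    using Suc Ck_SucD by (intro Ck_add) auto
  ultimately show ?case
    using Suc.prems by auto
qed simp

lemma Ck_affine: "Ck k f \<Longrightarrow> Ck k (\<lambda>x. f (c * x + d))"
proof (induction k arbitrary: f)
  case (Suc k)
  then have "\<And>x. (f has_real_derivative deriv f x) (at x)"
    by (auto simp: DERIV_deriv_iff_real_differentiable)
  then have "((\<lambda>x. f (c * x + d)) has_real_derivative deriv f (c * x + d) * c) (at x)" for x
    by (rule DERIV_chain2[where f = f]) (auto intro!: derivative_eq_intros)
  then have "deriv (\<lambda>x. f (c * x + d)) = (\<lambda>x. deriv f (c * x + d) * c)"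
    and "\<forall>x. (\<lambda>x. f (c * x + d)) differentiable (at x)"
    by (auto intro: DERIV_imp_deriv simp: real_differentiable_def)
  moreover have "Ck k (\<lambda>x. deriv f (c * x + d) * c)"
    using Suc by (intro Ck_mult Ck_const) auto
  ultimately show ?case
    by simp
qed simp

lemma Ck_flat: "Ck k (flat P)"
proof (induction k arbitrary: P)
  case (Suc k)
  then show ?case
    using flat_has_real_derivative by (auto simp: deriv_flat real_differentiable_def)
qed simp

definition Cinf :: "(real \<Rightarrow> real) \<Rightarrow> bool" where
  "Cinf f \<longleftrightarrow> (\<forall>k. Ck k f)"

lemma Cinf_differentiable: "Cinf f \<Longrightarrow> f differentiable (at x)"
  unfolding Cinf_def using Ck.simps(2) by blast

lemma Cinf_deriv: "Cinf f \<Longrightarrow> Cinf (deriv f)"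
  unfolding Cinf_def using Ck.simps(2) by blast

lemma Cinf_mult: "Cinf f \<Longrightarrow> Cinf g \<Longrightarrow> Cinf (\<lambda>x. f x * g x)"
  unfolding Cinf_def using Ck_mult by blast

lemma Cinf_affine: "Cinf f \<Longrightarrow> Cinf (\<lambda>x. f (c * x + d))"
  unfolding Cinf_def using Ck_affine by blast

lemma Cinf_flat: "Cinf (flat P)"
  unfolding Cinf_def using Ck_flat by blast

lemma smooth_fun_differentiable: "smooth_fun \<psi> \<Longrightarrow> \<psi> differentiable (at x)"
  unfolding smooth_fun_def differentiable_on_def by blast

lemma smooth_fun_continuous: "smooth_fun \<psi> \<Longrightarrow> continuous_on UNIV \<psi>"
  unfolding smooth_fun_def by (meson differentiable_imp_continuous_on)

lemma smooth_fun_pderiv: "smooth_fun \<psi> \<Longrightarrow> smooth_fun (pderiv_fun i \<psi>)"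
  unfolding smooth_fun_def by blast

lemma has_derivative_lincomb_frechet:
  fixes g h :: "'n::finite cfun"
  assumes "g differentiable (at x)" "h differentiable (at x)"
  shows "((\<lambda>x. c * g x + d * h x) has_derivative
           (\<lambda>v. c * frechet_derivative g (at x) v + d * frechet_derivative h (at x) v)) (at x)"
  using assms by (intro has_derivative_add has_derivative_mult_right frechet_derivative_works[THEN iffD1])

lemma pderiv_fun_lincomb:
  fixes g h :: "'n::finite cfun"
  assumes "\<And>x. g differentiable (at x)" "\<And>x. h differentiable (at x)"
  shows "pderiv_fun i (\<lambda>x. c * g x + d * h x) = (\<lambda>x. c * pderiv_fun i g x + d * pderiv_fun i h x)"
proof
  fix x
  have "(\<lambda>v. c * frechet_derivative g (at x) v + d * frechet_derivative h (at x) v)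
      = frechet_derivative (\<lambda>x. c * g x + d * h x) (at x)"
    by (rule frechet_derivative_at[OF has_derivative_lincomb_frechet[OF assms]])
  from fun_cong[OF this, of "axis i 1"]
  show "pderiv_fun i (\<lambda>x. c * g x + d * h x) x = c * pderiv_fun i g x + d * pderiv_fun i h x"
    unfolding pderiv_fun_def by simp
qed

lemma smooth_fun_lincomb:
  assumes "smooth_fun \<psi>" "smooth_fun \<psi>'"
  shows "smooth_fun (\<lambda>x. a * \<psi> x + b * \<psi>' x)"
proof -
  obtain F where F: "\<psi> \<in> F" "\<forall>g\<in>F. g differentiable_on UNIV \<and> (\<forall>i. pderiv_fun i g \<in> F)"
    using assms(1) unfolding smooth_fun_def by blast
  obtain F' where F': "\<psi>' \<in> F'" "\<forall>g\<in>F'. g differentiable_on UNIV \<and> (\<forall>i. pderiv_fun i g \<in> F')"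
    using assms(2) unfolding smooth_fun_def by blast
  let ?G = "{(\<lambda>x. c * g x + d * h x) | c d g h. g \<in> F \<and> h \<in> F'}"
  show ?thesis
    unfolding smooth_fun_def
  proof (intro exI[of _ ?G] conjI ballI allI)
    show "(\<lambda>x. a * \<psi> x + b * \<psi>' x) \<in> ?G"
      using F F' by blast
  next
    fix f
    assume "f \<in> ?G"
    then obtain c d g h where f: "f = (\<lambda>x. c * g x + d * h x)" and "g \<in> F" "h \<in> F'"
      by blast
    then have "g differentiable_on UNIV" "\<And>i. pderiv_fun i g \<in> F"
      and "h differentiable_on UNIV" "\<And>i. pderiv_fun i h \<in> F'"
      using F(2) F'(2) by blast+
    then have g: "\<And>x. g differentiable (at x)" "\<And>i. pderiv_fun i g \<in> F"
      and h: "\<And>x. h differentiable (at x)" "\<And>i. pderiv_fun i h \<in> F'"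
      by (simp_all add: differentiable_on_def)
    show "f differentiable_on UNIV"
      unfolding f differentiable_on_def differentiable_def
      using has_derivative_lincomb_frechet[OF g(1) h(1)] by blast
    show "pderiv_fun i f \<in> ?G" for i
      unfolding f pderiv_fun_lincomb[OF g(1) h(1)] using g(2) h(2) by blast
  qed
qed

lemma smooth_fun_line_derivative:
  assumes "smooth_fun \<psi>"
  shows "((\<lambda>t. \<psi> (y + t *\<^sub>R e)) has_vector_derivative
           frechet_derivative \<psi> (at (y + t *\<^sub>R e)) e) (at t)"
proof -
  have D: "(\<psi> has_derivative frechet_derivative \<psi> (at (y + t *\<^sub>R e))) (at (y + t *\<^sub>R e))"
    using smooth_fun_differentiable[OF assms] by (rule frechet_derivative_works[THEN iffD1])
  have "((\<lambda>t. y + t *\<^sub>R e) has_derivative (\<lambda>s. s *\<^sub>R e)) (at t)"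
    by (auto intro!: derivative_eq_intros)
  from has_derivative_compose[OF this D]
  have "((\<lambda>t. \<psi> (y + t *\<^sub>R e)) has_derivative
          (\<lambda>s. frechet_derivative \<psi> (at (y + t *\<^sub>R e)) (s *\<^sub>R e))) (at t)" .
  then show ?thesis
    unfolding has_vector_derivative_def linear_cmul[OF has_derivative_linear[OF D]] .
qed

lemma test_fun_continuous: "test_fun D \<psi> \<Longrightarrow> continuous_on UNIV \<psi>"
  unfolding test_fun_def by (rule smooth_fun_continuous) simp

lemma test_fun_pderiv_continuous: "test_fun D \<psi> \<Longrightarrow> continuous_on UNIV (pderiv_fun i \<psi>)"
  unfolding test_fun_def by (meson smooth_fun_pderiv smooth_fun_continuous)

lemma test_fun_vanishes_outside:
  assumes "test_fun D \<psi>" "x \<notin> D"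
  shows "\<psi> x = 0"
proof (rule ccontr)
  assume "\<psi> x \<noteq> 0"
  then have "x \<in> closure {x. \<psi> x \<noteq> 0}"
    using closure_subset by fastforce
  then show False
    using assms unfolding test_fun_def by blast
qed

lemma test_fun_lincomb:
  assumes "test_fun D \<psi>" "test_fun D \<psi>'"
  shows "test_fun D (\<lambda>x. a * \<psi> x + b * \<psi>' x)"
proof -
  let ?S = "closure {x. a * \<psi> x + b * \<psi>' x \<noteq> 0}"
  let ?A = "closure {x. \<psi> x \<noteq> 0}" and ?B = "closure {x. \<psi>' x \<noteq> 0}"
  have A: "smooth_fun \<psi>" "compact ?A" "?A \<subseteq> D" and B: "smooth_fun \<psi>'" "compact ?B" "?B \<subseteq> D"
    using assms unfolding test_fun_def by (simp_all only:)
  have "{x. a * \<psi> x + b * \<psi>' x \<noteq> 0} \<subseteq> {x. \<psi> x \<noteq> 0} \<union> {x. \<psi>' x \<noteq> 0}"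
    by auto
  then have S: "?S \<subseteq> ?A \<union> ?B"
    unfolding closure_Un[symmetric] by (rule closure_mono)
  have "compact ((?A \<union> ?B) \<inter> ?S)"
    by (rule compact_Int_closed[OF compact_Un[OF A(2) B(2)] closed_closure])
  then have "compact ?S"
    using S by (simp only: Int_absorb1)
  moreover have "?S \<subseteq> D"
    using S A(3) B(3) by blast
  ultimately show ?thesis
    unfolding test_fun_def using smooth_fun_lincomb[OF A(1) B(1)] by (simp only: simp_thms)
qed

section \<open>Bump functions approximating the indicator of a box\<close>

definition tensor_fun :: "('n::finite \<Rightarrow> real \<Rightarrow> real) \<Rightarrow> 'n cfun" where
  "tensor_fun g = (\<lambda>x. complex_of_real (\<Prod>k\<in>UNIV. g k (x $ k)))"

lemma has_derivative_tensor_fun: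
  assumes "\<And>k t. g k differentiable (at t)"
  shows "(tensor_fun g has_derivative (\<lambda>h. complex_of_real
           (\<Sum>k\<in>UNIV. deriv (g k) (x $ k) * h $ k * (\<Prod>j\<in>UNIV - {k}. g j (x $ j))))) (at x)"
proof -
  have "((\<lambda>x. g k (x $ k)) has_derivative (\<lambda>h. deriv (g k) (x $ k) * h $ k)) (at x)" for k
  proof -
    have "(g k has_derivative (*) (deriv (g k) (x $ k))) (at (x $ k))"
      using assms DERIV_deriv_iff_real_differentiable has_field_derivative_def by blast
    from has_derivative_compose[OF bounded_linear_imp_has_derivative[OF bounded_linear_vec_nth] this]
    show ?thesis
      by simp
  qed
  then have "((\<lambda>x. \<Prod>k\<in>UNIV. g k (x $ k)) has_derivative
      (\<lambda>h. \<Sum>k\<in>UNIV. deriv (g k) (x $ k) * h $ k * (\<Prod>j\<in>UNIV - {k}. g j (x $ j)))) (at x)"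
    by (rule has_derivative_prod)
  from has_derivative_compose[OF this bounded_linear_imp_has_derivative[OF bounded_linear_of_real]]
  show ?thesis
    unfolding tensor_fun_def .
qed

lemma pderiv_fun_tensor_fun:
  fixes g :: "'n::finite \<Rightarrow> real \<Rightarrow> real"
  assumes "\<And>k t. g k differentiable (at t)"
  shows "pderiv_fun i (tensor_fun g) = tensor_fun (g(i := deriv (g i)))"
proof
  fix x :: "real^'n"
  let ?g' = "g(i := deriv (g i))"
  have "pderiv_fun i (tensor_fun g) x = complex_of_real
      (\<Sum>k\<in>UNIV. deriv (g k) (x $ k) * axis i 1 $ k * (\<Prod>j\<in>UNIV - {k}. g j (x $ j)))"
    unfolding pderiv_fun_def frechet_derivative_at[OF has_derivative_tensor_fun[OF assms], symmetric] ..
  also have "(\<Sum>k\<in>UNIV. deriv (g k) (x $ k) * axis i 1 $ k * (\<Prod>j\<in>UNIV - {k}. g j (x $ j)))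
      = deriv (g i) (x $ i) * (\<Prod>j\<in>UNIV - {i}. g j (x $ j))"
    by (subst sum.remove[of UNIV i]) (auto simp: axis_def)
  also have "\<dots> = (\<Prod>k\<in>UNIV. ?g' k (x $ k))"
    by (subst prod.remove[of UNIV i]) (auto intro!: prod.cong)
  finally show "pderiv_fun i (tensor_fun g) x = tensor_fun ?g' x"
    unfolding tensor_fun_def .
qed

lemma smooth_fun_tensor_fun:
  assumes "\<And>k. Cinf (g k)"
  shows "smooth_fun (tensor_fun g)"
  unfolding smooth_fun_def
proof (intro exI[of _ "{tensor_fun g | g. \<forall>k. Cinf (g k)}"] conjI ballI allI)
  fix f
  assume "f \<in> {tensor_fun g | g. \<forall>k. Cinf (g k)}"
  then obtain h where f: "f = tensor_fun h" and h: "\<And>k. Cinf (h k)"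
    by auto
  have d: "\<And>k t. h k differentiable (at t)"
    using h Cinf_differentiable by blast
  show "f differentiable_on UNIV"
    unfolding f differentiable_on_def differentiable_def using has_derivative_tensor_fun[of h, OF d] by blast
  fix i
  have "\<forall>k. Cinf ((h(i := deriv (h i))) k)"
    using h Cinf_deriv by auto
  then show "pderiv_fun i f \<in> {tensor_fun g | g. \<forall>k. Cinf (g k)}"
    unfolding f pderiv_fun_tensor_fun[of h, OF d] by blast
qed (use assms in auto)

definition bump :: "real \<Rightarrow> real \<Rightarrow> real \<Rightarrow> real \<Rightarrow> real" where
  "bump m a b t = flat 1 (m * (t - a) - 1) * flat 1 (m * (b - t) - 1)"

lemma Cinf_bump: "Cinf (bump m a b)"
proof -
  have "bump m a b = (\<lambda>t. flat 1 (m * t + (- m * a - 1)) * flat 1 ((- m) * t + (m * b - 1)))"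
    by (auto simp: bump_def algebra_simps)
  then show ?thesis
    by (simp only:) (intro Cinf_mult Cinf_affine[of "flat 1"] Cinf_flat)
qed

lemma bump_bounds: "0 \<le> bump m a b t" "bump m a b t \<le> 1"
  unfolding bump_def using flat_1_bounds by (auto intro: mult_le_one)

lemma bump_nonzero_imp:
  assumes "bump m a b t \<noteq> 0" "m > 0"
  shows "a + 1 / m < t" "t < b - 1 / m"
proof -
  from assms have "m * (t - a) - 1 > 0" "m * (b - t) - 1 > 0"
    by (auto simp: bump_def flat_def split: if_splits)
  with assms(2) show "a + 1 / m < t" "t < b - 1 / m"
    by (auto simp: field_simps)
qed

lemma bump_eq_0:
  assumes "t \<le> a \<or> b \<le> t" "m \<ge> 0"
  shows "bump m a b t = 0"
proof -
  have "m * (t - a) \<le> 0 \<or> m * (b - t) \<le> 0"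
    using assms by (auto intro: mult_nonneg_nonpos)
  then show ?thesis
    by (auto simp: bump_def flat_def)
qed

lemma bump_tendsto_1:
  assumes "a < t" "t < b"
  shows "(\<lambda>n. bump (real (Suc n)) a b t) \<longlonglongrightarrow> 1"
proof -
  have "filterlim (\<lambda>n. real (Suc n) * c - 1) at_top sequentially" if "c > 0" for c
    using that by real_asymp
  then have "(\<lambda>n. flat 1 (real (Suc n) * (t - a) - 1) * flat 1 (real (Suc n) * (b - t) - 1)) \<longlonglongrightarrow> 1 * 1"
    using assms by (intro tendsto_mult filterlim_compose[OF flat_1_tendsto_1]) auto
  then show ?thesis
    unfolding bump_def by simp
qed

definition box_bump :: "nat \<Rightarrow> real^'n::finite \<Rightarrow> real^'n \<Rightarrow> 'n cfun" where
  "box_bump n a b = tensor_fun (\<lambda>k. bump (real (Suc n)) (a $ k) (b $ k))"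

lemma norm_box_bump_le_1: "cmod (box_bump n a b x) \<le> 1"
proof -
  let ?P = "\<Prod>k\<in>UNIV. bump (real (Suc n)) (a $ k) (b $ k) (x $ k)"
  have "0 \<le> ?P" "?P \<le> 1"
    using bump_bounds by (auto intro!: prod_nonneg prod_le_1)
  then show ?thesis
    unfolding box_bump_def tensor_fun_def norm_of_real by simp
qed

lemma box_bump_support:
  "{x. box_bump n a b x \<noteq> 0} \<subseteq> cbox (\<chi> k. a $ k + 1 / real (Suc n)) (\<chi> k. b $ k - 1 / real (Suc n))"
proof
  fix x
  assume "x \<in> {x. box_bump n a b x \<noteq> 0}"
  then have nz: "bump (real (Suc n)) (a $ k) (b $ k) (x $ k) \<noteq> 0" for k
    unfolding box_bump_def tensor_fun_def by auto
  have "a $ k + 1 / real (Suc n) < x $ k \<and> x $ k < b $ k - 1 / real (Suc n)" for k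
    using bump_nonzero_imp[OF nz[of k]] by simp
  then show "x \<in> cbox (\<chi> k. a $ k + 1 / real (Suc n)) (\<chi> k. b $ k - 1 / real (Suc n))"
    unfolding mem_box_cart by (simp add: less_imp_le)
qed

lemma test_fun_box_bump:
  assumes "box a b \<subseteq> D"
  shows "test_fun D (box_bump n a b)"
proof -
  let ?C = "cbox (\<chi> k. a $ k + 1 / real (Suc n)) (\<chi> k. b $ k - 1 / real (Suc n))"
  have C: "closure {x. box_bump n a b x \<noteq> 0} \<subseteq> ?C"
    by (rule closure_minimal[OF box_bump_support closed_cbox])
  have "?C \<subseteq> box a b"
  proof
    fix x
    assume "x \<in> ?C"
    moreover have "0 < 1 / real (Suc n)"
      by simp
    ultimately show "x \<in> box a b"
      unfolding mem_box_cart by (smt (verit) vec_lambda_beta)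
  qed
  moreover have "compact (closure {x. box_bump n a b x \<noteq> 0})"
    using C by (meson bounded_cbox bounded_subset closed_closure compact_eq_bounded_closed)
  moreover have "smooth_fun (box_bump n a b)"
    unfolding box_bump_def by (intro smooth_fun_tensor_fun Cinf_bump)
  ultimately show ?thesis
    unfolding test_fun_def using C assms by blast
qed

lemma box_bump_tendsto_indicator:
  fixes a b :: "real^'n::finite"
  shows "(\<lambda>n. box_bump n a b x) \<longlonglongrightarrow> indicator (box a b) x"
proof (cases "x \<in> box a b")
  case True
  then have "(\<lambda>n. \<Prod>k\<in>UNIV. bump (real (Suc n)) (a $ k) (b $ k) (x $ k)) \<longlonglongrightarrow> (\<Prod>k\<in>(UNIV :: 'n set). 1)"
    by (intro tendsto_prod bump_tendsto_1) (auto simp: mem_box_cart)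
  then have "(\<lambda>n. complex_of_real (\<Prod>k\<in>UNIV. bump (real (Suc n)) (a $ k) (b $ k) (x $ k)))
      \<longlonglongrightarrow> complex_of_real 1"
    by (intro tendsto_of_real) simp
  then show ?thesis
    using True unfolding box_bump_def tensor_fun_def by simp
next
  case False
  then obtain k where "x $ k \<le> a $ k \<or> b $ k \<le> x $ k"
    by (auto simp: mem_box_cart not_less)
  then have "bump (real (Suc n)) (a $ k) (b $ k) (x $ k) = 0" for n
    by (intro bump_eq_0) auto
  then have "box_bump n a b x = 0" for n
    unfolding box_bump_def tensor_fun_def by (metis UNIV_I finite prod_zero of_real_0)
  then show ?thesis
    using False by simp
qed

lemma continuous_bounded_on_bounded:
  fixes g :: "'a::euclidean_space \<Rightarrow> 'b::real_normed_vector"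
  assumes "bounded D" "continuous_on UNIV g"
  obtains B where "\<And>x. x \<in> D \<Longrightarrow> norm (g x) \<le> B"
proof -
  have "compact (g ` closure D)"
    using assms by (intro compact_continuous_image compact_closure[THEN iffD2])
      (auto intro: continuous_on_subset)
  then obtain B where "\<forall>y\<in>g ` closure D. norm y \<le> B"
    using compact_imp_bounded bounded_iff by metis
  then show ?thesis
    using closure_subset that by fastforce
qed

lemma set_integrable_mult_bounded:
  fixes f g :: "'a::euclidean_space \<Rightarrow> complex"
  assumes f: "set_integrable lborel D f" and g: "g \<in> borel_measurable lborel"
    and B: "\<And>x. x \<in> D \<Longrightarrow> cmod (g x) \<le> B"
  shows "set_integrable lborel D (\<lambda>x. f x * g x)"
proof -
  have "(\<lambda>x. indicator D x *\<^sub>R f x) \<in> borel_measurable lborel"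
    using f unfolding set_integrable_def by auto
  then have "(\<lambda>x. (indicator D x *\<^sub>R f x) * g x) \<in> borel_measurable lborel"
    using g by measurable
  then have m: "(\<lambda>x. indicator D x *\<^sub>R (f x * g x)) \<in> borel_measurable lborel"
    by (simp add: scaleR_conv_of_real mult.assoc)
  have i: "integrable lborel (\<lambda>x. B * norm (indicator D x *\<^sub>R f x))"
    using f unfolding set_integrable_def by (intro integrable_mult_right integrable_norm)
  have "norm (indicator D x *\<^sub>R (f x * g x)) \<le> norm (B * norm (indicator D x *\<^sub>R f x))" for x
  proof (cases "x \<in> D")
    case True
    then have "cmod (f x) * cmod (g x) \<le> cmod (f x) * B"
      by (intro mult_left_mono B) auto
    then show ?thesis
      using True by (auto simp: norm_mult mult.commute)
  qed simp
  then show ?thesis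
    unfolding set_integrable_def by (intro Bochner_Integration.integrable_bound[OF i m] AE_I2)
qed

lemma in_L2_borel_measurable: "in_L2 D u \<Longrightarrow> (\<lambda>x. indicator D x *\<^sub>R u x) \<in> borel_measurable lborel"
  unfolding in_L2_def set_borel_measurable_def by auto

lemma in_L2_integrable: "in_L2 D u \<Longrightarrow> integrable lborel (\<lambda>x. indicator D x *\<^sub>R (cmod (u x))\<^sup>2)"
  unfolding in_L2_def set_integrable_def by auto

lemma in_L2_set_integrable:
  assumes "open D" "bounded D" "in_L2 D v"
  shows "set_integrable lborel D v"
proof -
  have "integrable lborel (\<lambda>x. indicat_real D x + indicator D x *\<^sub>R (cmod (v x))\<^sup>2)"
    using assms in_L2_integrable emeasure_bounded_finite
    by (intro Bochner_Integration.integrable_add integrable_real_indicator) auto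
  moreover have "cmod (v x) \<le> 1 + (cmod (v x))\<^sup>2" for x
  proof -
    have "2 * cmod (v x) \<le> (cmod (v x))\<^sup>2 + 1"
      using sum_squares_bound[of "cmod (v x)" 1] by simp
    then show ?thesis
      using norm_ge_zero[of "v x"] by linarith
  qed
  then have "norm (indicator D x *\<^sub>R v x) \<le> norm (indicat_real D x + indicator D x *\<^sub>R (cmod (v x))\<^sup>2)"
    for x
    by (auto simp: indicator_def)
  ultimately show ?thesis
    unfolding set_integrable_def
    by (intro Bochner_Integration.integrable_bound[OF _ in_L2_borel_measurable[OF assms(3)]] AE_I2)
qed

lemma continuous_in_L2:
  fixes g :: "'n::finite cfun"
  assumes D: "open D" "bounded D" and g: "continuous_on UNIV g"
  shows "in_L2 D g"
proof -
  obtain B where B: "\<And>x. x \<in> D \<Longrightarrow> cmod (g x) \<le> B"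
    using continuous_bounded_on_bounded[OF D(2) g] by blast
  have gm: "g \<in> borel_measurable lborel"
    using borel_measurable_continuous_onI[OF g] by simp
  have "integrable lborel (indicat_real D)"
    using D by (intro integrable_real_indicator emeasure_bounded_finite) auto
  then have "set_integrable lborel D (\<lambda>x. complex_of_real 1)"
    unfolding set_integrable_def by (simp add: scaleR_conv_of_real integrable_of_real)
  moreover have "cmod (complex_of_real ((cmod (g x))\<^sup>2)) \<le> B * B" if "x \<in> D" for x
    using B[OF that] by (simp add: power2_eq_square norm_mult mult_mono' del: of_real_mult)
  ultimately have "set_integrable lborel D (\<lambda>x. complex_of_real 1 * complex_of_real ((cmod (g x))\<^sup>2))"
    using gm by (intro set_integrable_mult_bounded) auto
  moreover have "(\<lambda>x. indicator D x *\<^sub>R (complex_of_real 1 * complex_of_real ((cmod (g x))\<^sup>2)))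
      = (\<lambda>x. complex_of_real (indicator D x *\<^sub>R (cmod (g x))\<^sup>2))"
    by (auto simp: indicator_def)
  ultimately have "set_integrable lborel D (\<lambda>x. (cmod (g x))\<^sup>2)"
    unfolding set_integrable_def using complex_of_real_integrable_eq by metis
  moreover have "set_borel_measurable lborel D g"
    unfolding set_borel_measurable_def
    by (intro borel_measurable_scaleR borel_measurable_indicator gm) (use D(1) in simp)
  ultimately show ?thesis
    unfolding in_L2_def by simp
qed

lemma cmod_lincomb_sq_le:
  fixes a b z w :: complex
  shows "(cmod (a * z + b * w))\<^sup>2 \<le> 2 * (cmod a)\<^sup>2 * (cmod z)\<^sup>2 + 2 * (cmod b)\<^sup>2 * (cmod w)\<^sup>2"
proof -
  have "(cmod (a * z + b * w))\<^sup>2 \<le> (cmod a * cmod z + cmod b * cmod w)\<^sup>2"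
    by (intro power_mono) (auto simp flip: norm_mult intro: norm_triangle_ineq)
  also have "\<dots> \<le> 2 * (cmod a * cmod z)\<^sup>2 + 2 * (cmod b * cmod w)\<^sup>2"
    using sum_squares_bound[of "cmod a * cmod z" "cmod b * cmod w"] by (simp add: power2_sum)
  finally show ?thesis
    by (simp only: power_mult_distrib mult.assoc)
qed

lemma in_L2_lincomb:
  assumes u: "in_L2 D u" and u': "in_L2 D u'"
  shows "in_L2 D (\<lambda>x. a * u x + b * u' x)"
proof -
  have eq: "(\<lambda>x. indicator D x *\<^sub>R (a * u x + b * u' x))
      = (\<lambda>x. a * (indicator D x *\<^sub>R u x) + b * (indicator D x *\<^sub>R u' x))"
    by (auto simp: indicator_def)
  have m: "(\<lambda>x. indicator D x *\<^sub>R (a * u x + b * u' x)) \<in> borel_measurable lborel"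
    unfolding eq using in_L2_borel_measurable[OF u] in_L2_borel_measurable[OF u'] by measurable
  have "(\<lambda>x. (cmod (indicator D x *\<^sub>R (a * u x + b * u' x)))\<^sup>2) \<in> borel_measurable lborel"
    using m by measurable
  moreover have "(\<lambda>x. (cmod (indicator D x *\<^sub>R (a * u x + b * u' x)))\<^sup>2)
      = (\<lambda>x. indicator D x *\<^sub>R (cmod (a * u x + b * u' x))\<^sup>2)"
    by (auto simp: indicator_def)
  ultimately have m': "(\<lambda>x. indicator D x *\<^sub>R (cmod (a * u x + b * u' x))\<^sup>2) \<in> borel_measurable lborel"
    by simp
  have "integrable lborel (\<lambda>x. 2 * (cmod a)\<^sup>2 * (indicator D x *\<^sub>R (cmod (u x))\<^sup>2)
      + 2 * (cmod b)\<^sup>2 * (indicator D x *\<^sub>R (cmod (u' x))\<^sup>2))"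
    using in_L2_integrable[OF u] in_L2_integrable[OF u'] by auto
  then have "integrable lborel (\<lambda>x. indicator D x *\<^sub>R (cmod (a * u x + b * u' x))\<^sup>2)"
    using cmod_lincomb_sq_le[of a "u _" b "u' _"]
    by (intro Bochner_Integration.integrable_bound[OF _ m'] AE_I2) (auto simp: indicator_def)
  then show ?thesis
    using m unfolding in_L2_def set_integrable_def set_borel_measurable_def by simp
qed

lemma sq_norm_L2_nonneg: "0 \<le> sq_norm_L2 D u"
  unfolding sq_norm_L2_def set_lebesgue_integral_def by (intro integral_nonneg_AE) auto

lemma sq_norm_L2_lincomb_le:
  assumes u: "in_L2 D u" and u': "in_L2 D u'"
  shows "sq_norm_L2 D (\<lambda>x. a * u x + b * u' x)
    \<le> 2 * (cmod a)\<^sup>2 * sq_norm_L2 D u + 2 * (cmod b)\<^sup>2 * sq_norm_L2 D u'"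
proof -
  note i1 = in_L2_integrable[OF u] and i2 = in_L2_integrable[OF u']
  have "sq_norm_L2 D (\<lambda>x. a * u x + b * u' x) \<le> integral\<^sup>L lborel (\<lambda>x.
      2 * (cmod a)\<^sup>2 * (indicator D x *\<^sub>R (cmod (u x))\<^sup>2) + 2 * (cmod b)\<^sup>2 * (indicator D x *\<^sub>R (cmod (u' x))\<^sup>2))"
    unfolding sq_norm_L2_def set_lebesgue_integral_def
    using in_L2_integrable[OF in_L2_lincomb[OF u u']] i1 i2 cmod_lincomb_sq_le[of a "u _" b "u' _"]
    by (intro integral_mono) (auto simp: indicator_def)
  also have "\<dots> = 2 * (cmod a)\<^sup>2 * sq_norm_L2 D u + 2 * (cmod b)\<^sup>2 * sq_norm_L2 D u'"
    unfolding sq_norm_L2_def set_lebesgue_integral_def using i1 i2 by simp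
  finally show ?thesis .
qed

lemma sq_norm_L2_cong_AE:
  assumes "in_L2 D f" "in_L2 D g" "AE x in lborel. x \<in> D \<longrightarrow> f x = g x"
  shows "sq_norm_L2 D f = sq_norm_L2 D g"
  unfolding sq_norm_L2_def set_lebesgue_integral_def
  using in_L2_integrable[OF assms(1)] in_L2_integrable[OF assms(2)] assms(3)
  by (intro integral_cong_AE) (auto elim!: AE_mp simp: indicator_def)

lemma borel_measurable_cnj [measurable]:
  "f \<in> borel_measurable M \<Longrightarrow> (\<lambda>x. cnj (f x :: complex)) \<in> borel_measurable M"
  using borel_measurable_continuous_on[OF continuous_on_cnj[OF continuous_on_id]] by blast

lemma set_integrable_mult_cnj:
  assumes f: "in_L2 D f" and g: "in_L2 D g"
  shows "set_integrable lborel D (\<lambda>x. f x * cnj (g x))"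
proof -
  have "(\<lambda>x. (indicator D x *\<^sub>R f x) * cnj (indicator D x *\<^sub>R g x)) \<in> borel_measurable lborel"
    using in_L2_borel_measurable[OF f] in_L2_borel_measurable[OF g] by measurable
  moreover have "(\<lambda>x. (indicator D x *\<^sub>R f x) * cnj (indicator D x *\<^sub>R g x))
      = (\<lambda>x. indicator D x *\<^sub>R (f x * cnj (g x)))"
    by (auto simp: indicator_def)
  ultimately have m: "(\<lambda>x. indicator D x *\<^sub>R (f x * cnj (g x))) \<in> borel_measurable lborel"
    by simp
  have "cmod (f x * cnj (g x)) \<le> (cmod (f x))\<^sup>2 + (cmod (g x))\<^sup>2" for x
  proof -
    have "2 * (cmod (f x) * cmod (g x)) \<le> (cmod (f x))\<^sup>2 + (cmod (g x))\<^sup>2"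
      using sum_squares_bound[of "cmod (f x)" "cmod (g x)"] by simp
    moreover have "0 \<le> cmod (f x) * cmod (g x)"
      by simp
    ultimately show ?thesis
      unfolding norm_mult complex_mod_cnj by linarith
  qed
  moreover have "integrable lborel
      (\<lambda>x. indicator D x *\<^sub>R (cmod (f x))\<^sup>2 + indicator D x *\<^sub>R (cmod (g x))\<^sup>2)"
    using in_L2_integrable[OF f] in_L2_integrable[OF g] by auto
  ultimately show ?thesis
    unfolding set_integrable_def
    by (intro Bochner_Integration.integrable_bound[OF _ m] AE_I2) (auto simp: indicator_def)
qed

lemma set_integrable_mult_test_fun:
  assumes D: "open D" "bounded D" and f: "in_L2 D f" and \<psi>: "test_fun D \<psi>"
  shows "set_integrable lborel D (\<lambda>x. f x * \<psi> x)"
    and "set_integrable lborel D (\<lambda>x. f x * pderiv_fun i \<psi> x)"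
proof -
  have f1: "set_integrable lborel D f"
    by (rule in_L2_set_integrable[OF D f])
  obtain B where "\<And>x. x \<in> D \<Longrightarrow> cmod (\<psi> x) \<le> B"
    using continuous_bounded_on_bounded[OF D(2) test_fun_continuous[OF \<psi>]] by blast
  then show "set_integrable lborel D (\<lambda>x. f x * \<psi> x)"
    using borel_measurable_continuous_onI[OF test_fun_continuous[OF \<psi>]]
    by (intro set_integrable_mult_bounded[OF f1]) auto
  obtain B' where "\<And>x. x \<in> D \<Longrightarrow> cmod (pderiv_fun i \<psi> x) \<le> B'"
    using continuous_bounded_on_bounded[OF D(2) test_fun_pderiv_continuous[OF \<psi>]] by blast
  then show "set_integrable lborel D (\<lambda>x. f x * pderiv_fun i \<psi> x)"
    using borel_measurable_continuous_onI[OF test_fun_pderiv_continuous[OF \<psi>]]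
    by (intro set_integrable_mult_bounded[OF f1]) auto
qed

lemma set_integral_lincomb:
  fixes f g :: "'a::euclidean_space \<Rightarrow> complex"
  assumes "set_integrable lborel D f" "set_integrable lborel D g"
  shows "(LINT x:D|lborel. a * f x + b * g x) = a * (LINT x:D|lborel. f x) + b * (LINT x:D|lborel. g x)"
  using assms by (simp add: set_integral_add set_integrable_mult_right set_integral_mult_right)

section \<open>The fundamental lemma of the calculus of variations\<close>

lemma AE_zero_if_box_integrals_zero:
  fixes h :: "'a::euclidean_space \<Rightarrow> 'b::{second_countable_topology, banach}"
  assumes h: "integrable lborel h" and total: "integral\<^sup>L lborel h = 0"
    and box: "\<And>a b :: 'a. (LINT x:box a b|lborel. h x) = 0"
  shows "AE x in lborel. h x = 0"
proof (rule sigma_finite_measure.density_zero[OF sigma_finite_lborel h])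
  let ?G = "range (\<lambda>(a, b). box a b :: 'a set)"
  have sets: "sets lborel = sigma_sets UNIV ?G"
    unfolding sets_lborel borel_eq_box by simp
  fix A :: "'a set"
  have "Int_stable ?G"
    by (auto simp: Int_stable_def box_Int_box)
  moreover have "?G \<subseteq> Pow UNIV"
    by simp
  moreover assume "A \<in> sets lborel"
  then have "A \<in> sigma_sets UNIV ?G"
    unfolding sets .
  ultimately show "(LINT x:A|lborel. h x) = 0"
  proof (induction rule: sigma_sets_induct_disjoint)
    case (basic A)
    then show ?case
      using box by auto
  next
    case empty
    show ?case
      by (simp add: set_lebesgue_integral_def)
  next
    case (compl A)
    have "integrable lborel (\<lambda>x. indicator A x *\<^sub>R h x)"
      using compl(1) unfolding sets[symmetric] by (rule integrable_mult_indicator[OF _ h])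
    then have "(LINT x:(UNIV - A)|lborel. h x) = integral\<^sup>L lborel h - (LINT x:A|lborel. h x)"
      unfolding set_lebesgue_integral_def
      by (subst Bochner_Integration.integral_diff[OF h, symmetric])
         (auto intro!: Bochner_Integration.integral_cong simp: indicator_def)
    then show ?case
      using compl(2) total by simp
  next
    case (union A)
    have A: "A i \<in> sets lborel" for i
      using union(2) unfolding sets by auto
    have "(LINT x:(\<Union>i. A i)|lborel. h x) = (\<Sum>i. (LINT x:(A i)|lborel. h x))"
      using union(1) A
      by (intro lebesgue_integral_countable_add)
         (auto simp: disjoint_family_on_def set_integrable_def intro!: integrable_mult_indicator[OF _ h])
    then show ?case
      using union(3) by simp
  qed
qed

lemma AE_zero_on_box_if_box_integrals_zero:
  fixes w :: "'a::euclidean_space \<Rightarrow> 'b::{second_countable_topology, banach}"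
  assumes w: "set_integrable lborel D w" and cd: "box c d \<subseteq> D"
    and box: "\<And>a b. box a b \<subseteq> D \<Longrightarrow> (LINT x:box a b|lborel. w x) = 0"
  shows "AE x in lborel. x \<in> box c d \<longrightarrow> w x = 0"
proof -
  let ?h = "\<lambda>x. indicator (box c d) x *\<^sub>R w x"
  have "integrable lborel ?h"
    using set_integrable_subset[OF w _ cd] unfolding set_integrable_def by simp
  moreover have "integral\<^sup>L lborel ?h = 0"
    using box[OF cd] by (simp add: set_lebesgue_integral_def)
  moreover have "(LINT x:box a b|lborel. ?h x) = 0" for a b
  proof -
    obtain a' b' where ab': "box a b \<inter> box c d = box a' b'"
      by (rule that[OF box_Int_box])
    have "(LINT x:box a b|lborel. ?h x) = (LINT x:box a' b'|lborel. w x)"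
      unfolding set_lebesgue_integral_def ab'[symmetric]
      by (rule Bochner_Integration.integral_cong) (auto simp: indicator_def)
    also have "\<dots> = 0"
      using ab' cd by (intro box) auto
    finally show ?thesis .
  qed
  ultimately have "AE x in lborel. ?h x = 0"
    by (rule AE_zero_if_box_integrals_zero)
  then show ?thesis
    by eventually_elim (auto simp: indicator_def)
qed

lemma AE_zero_on_open_if_box_integrals_zero:
  fixes w :: "'a::euclidean_space \<Rightarrow> 'b::{second_countable_topology, banach}"
  assumes D: "open D" and w: "set_integrable lborel D w"
    and box: "\<And>a b. box a b \<subseteq> D \<Longrightarrow> (LINT x:box a b|lborel. w x) = 0"
  shows "AE x in lborel. x \<in> D \<longrightarrow> w x = 0"
proof -
  obtain \<B> where \<B>: "countable \<B>" "\<B> \<subseteq> Pow D" "\<And>X. X \<in> \<B> \<Longrightarrow> \<exists>a b. X = box a b" "\<Union>\<B> = D"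
    using open_countable_Union_open_box[OF D] by metis
  have "\<forall>X\<in>\<B>. AE x in lborel. x \<in> X \<longrightarrow> w x = 0"
  proof
    fix X
    assume X: "X \<in> \<B>"
    then obtain a b where "X = box a b"
      using \<B>(3) by blast
    with X \<B>(2) show "AE x in lborel. x \<in> X \<longrightarrow> w x = 0"
      using AE_zero_on_box_if_box_integrals_zero[OF w _ box] by auto
  qed
  then have "AE x in lborel. \<forall>X\<in>\<B>. x \<in> X \<longrightarrow> w x = 0"
    using AE_ball_countable[OF \<B>(1), where M = lborel and P = "\<lambda>x X. x \<in> X \<longrightarrow> w x = 0"] by simp
  then show ?thesis
    by eventually_elim (use \<B>(4) in blast)
qed

lemma set_integral_box_bump_tendsto:
  fixes w :: "'n::finite cfun"
  assumes w: "set_integrable lborel D w" and ab: "box a b \<subseteq> D"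
  shows "(\<lambda>n. LINT x:D|lborel. w x * box_bump n a b x) \<longlonglongrightarrow> (LINT x:box a b|lborel. w x)"
proof -
  let ?W = "\<lambda>x. indicator D x *\<^sub>R w x"
  have W: "integrable lborel ?W"
    using w unfolding set_integrable_def .
  have Wm: "?W \<in> borel_measurable lborel"
    using W by auto
  have "box_bump n a b \<in> borel_measurable lborel" for n
    using borel_measurable_continuous_onI[OF test_fun_continuous[OF test_fun_box_bump[OF ab]]] by simp
  then have "(\<lambda>x. ?W x * box_bump n a b x) \<in> borel_measurable lborel" for n
    using Wm by measurable
  moreover have "(\<lambda>x. ?W x * indicator (box a b) x) \<in> borel_measurable lborel"
    using Wm by measurable
  moreover have "norm (?W x * box_bump n a b x) \<le> norm (?W x)" for n x
  proof -
    have "norm (?W x * box_bump n a b x) \<le> norm (?W x) * 1"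
      unfolding norm_mult by (intro mult_left_mono norm_box_bump_le_1) simp
    then show ?thesis
      by simp
  qed
  ultimately have "(\<lambda>n. integral\<^sup>L lborel (\<lambda>x. ?W x * box_bump n a b x))
      \<longlonglongrightarrow> integral\<^sup>L lborel (\<lambda>x. ?W x * indicator (box a b) x)"
    by (intro integral_dominated_convergence[where w = "\<lambda>x. norm (?W x)"] AE_I2
        tendsto_mult tendsto_const box_bump_tendsto_indicator integrable_norm[OF W])
  moreover have "integral\<^sup>L lborel (\<lambda>x. ?W x * box_bump n a b x) = (LINT x:D|lborel. w x * box_bump n a b x)" for n
    unfolding set_lebesgue_integral_def by (simp add: scaleR_conv_of_real mult.assoc)
  moreover have "integral\<^sup>L lborel (\<lambda>x. ?W x * indicator (box a b) x) = (LINT x:box a b|lborel. w x)"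
    unfolding set_lebesgue_integral_def
    using ab by (intro Bochner_Integration.integral_cong) (auto simp: indicator_def)
  ultimately show ?thesis
    by simp
qed

lemma test_fun_orthogonal_imp_AE_zero:
  fixes w :: "'n::finite cfun"
  assumes D: "open D" and w: "set_integrable lborel D w"
    and orth: "\<And>\<psi>. test_fun D \<psi> \<Longrightarrow> (LINT x:D|lborel. w x * \<psi> x) = 0"
  shows "AE x in lborel. x \<in> D \<longrightarrow> w x = 0"
proof (rule AE_zero_on_open_if_box_integrals_zero[OF D w])
  fix a b :: "real^'n"
  assume ab: "box a b \<subseteq> D"
  have "(\<lambda>n. LINT x:D|lborel. w x * box_bump n a b x) \<longlonglongrightarrow> (LINT x:box a b|lborel. w x)"
    by (rule set_integral_box_bump_tendsto[OF w ab])
  then have "(\<lambda>n. 0) \<longlonglongrightarrow> (LINT x:box a b|lborel. w x)"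
    by (simp add: orth[OF test_fun_box_bump[OF ab]])
  then show "(LINT x:box a b|lborel. w x) = 0"
    using LIMSEQ_unique[OF tendsto_const] by metis
qed

section \<open>Integration by parts for test functions\<close>

lemma difference_quotient_tendsto:
  fixes g :: "real \<Rightarrow> 'a::real_normed_vector"
  assumes "(g has_vector_derivative g') (at 0)"
  shows "(\<lambda>n. real (Suc n) *\<^sub>R (g (1 / real (Suc n)) - g 0)) \<longlonglongrightarrow> g'"
proof -
  have "((\<lambda>t. norm (g t - g 0 - (t - 0) *\<^sub>R g') / norm (t - 0)) \<longlongrightarrow> 0) (at 0)"
    using assms unfolding has_vector_derivative_def has_derivative_iff_norm by blast
  then have "((\<lambda>t. norm (g t - g 0 - (t - 0) *\<^sub>R g') / norm (t - 0)) \<longlongrightarrow> 0) (at_right 0)"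
    using filterlim_at_split by blast
  moreover have "filterlim (\<lambda>n. 1 / real (Suc n)) (at_right 0) sequentially"
    by (intro tendsto_imp_filterlim_at_right LIMSEQ_Suc[OF lim_const_over_n]) simp
  ultimately have "(\<lambda>n. norm (g (1 / real (Suc n)) - g 0 - (1 / real (Suc n) - 0) *\<^sub>R g')
      / norm (1 / real (Suc n) - 0)) \<longlonglongrightarrow> 0"
    by (rule filterlim_compose)
  moreover have "norm (g (1 / real (Suc n)) - g 0 - (1 / real (Suc n)) *\<^sub>R g') / norm (1 / real (Suc n))
      = norm (real (Suc n) *\<^sub>R (g (1 / real (Suc n)) - g 0) - g')" for n
  proof -
    have "real (Suc n) *\<^sub>R (g (1 / real (Suc n)) - g 0) - g'
        = real (Suc n) *\<^sub>R (g (1 / real (Suc n)) - g 0 - (1 / real (Suc n)) *\<^sub>R g')"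
      by (simp add: scaleR_diff_right)
    then show ?thesis
      by (simp add: divide_inverse mult.commute)
  qed
  ultimately have "(\<lambda>n. norm (real (Suc n) *\<^sub>R (g (1 / real (Suc n)) - g 0) - g')) \<longlonglongrightarrow> 0"
    by simp
  then show ?thesis
    unfolding tendsto_norm_zero_iff LIM_zero_iff .
qed

lemma norm_directional_difference_le:
  fixes f h :: "'a::real_normed_vector \<Rightarrow> 'b::real_inner"
  assumes deriv: "\<And>t. ((\<lambda>t. f (y + t *\<^sub>R e)) has_vector_derivative h (y + t *\<^sub>R e)) (at t)"
    and M: "\<And>x. norm (h x) \<le> M" and t: "t > 0"
  shows "norm (f (y + t *\<^sub>R e) - f y) \<le> M * t"
proof -
  have cont: "continuous_on {0..t} (\<lambda>t. f (y + t *\<^sub>R e))"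
    by (rule continuous_on_vector_derivative) (use deriv has_vector_derivative_at_within in blast)
  obtain \<xi> where "norm (f (y + t *\<^sub>R e) - f (y + 0 *\<^sub>R e)) \<le> norm ((t - 0) *\<^sub>R h (y + \<xi> *\<^sub>R e))"
    using mvt_general[OF t cont, of "\<lambda>x s. s *\<^sub>R h (y + x *\<^sub>R e)"] deriv
    unfolding has_vector_derivative_def by blast
  also have "\<dots> \<le> t * M"
    using t M by (simp add: mult_left_mono)
  finally show ?thesis
    by (simp add: mult.commute)
qed

lemma integral_difference_eq_0:
  fixes f :: "'a::euclidean_space \<Rightarrow> 'b::{banach, second_countable_topology}"
  assumes f: "integrable lborel f"
  shows "integral\<^sup>L lborel (\<lambda>y. c *\<^sub>R (f (y + d) - f y)) = 0"
proof -
  have T: "(+) d \<in> lborel \<rightarrow>\<^sub>M borel" and fm: "f \<in> borel_measurable borel"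
    using f by auto
  have "integrable lborel (\<lambda>y. f (d + y))" "integral\<^sup>L lborel (\<lambda>y. f (d + y)) = integral\<^sup>L lborel f"
    using integrable_distr_eq[OF T fm] integral_distr[OF T fm] lborel_distr_plus[of d] f by simp_all
  then show ?thesis
    using f by (simp add: add.commute)
qed

lemma integrable_continuous_vanishing_outside:
  fixes f :: "'a::euclidean_space \<Rightarrow> 'b::{banach, second_countable_topology}"
  assumes S: "bounded S" and f: "continuous_on UNIV f" and vanish: "\<And>x. x \<notin> S \<Longrightarrow> f x = 0"
  shows "integrable lborel f"
proof -
  obtain R where R: "\<And>x. x \<in> S \<Longrightarrow> norm x \<le> R"
    using S bounded_iff by blast
  have "integrable lborel (\<lambda>x. indicator (cball 0 R) x *\<^sub>R f x)"
    using f by (intro borel_integrable_compact) (auto intro: continuous_on_subset)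
  moreover have "indicator (cball 0 R) x *\<^sub>R f x = f x" for x
    using R vanish[of x] by (cases "x \<in> S") (auto simp: indicator_def)
  ultimately show ?thesis
    by simp
qed

lemma norm_difference_quotient_le:
  fixes f h :: "'a::real_normed_vector \<Rightarrow> 'b::real_inner"
  assumes R: "\<And>x. x \<in> S \<Longrightarrow> norm x \<le> R" and vanish: "\<And>x. x \<notin> S \<Longrightarrow> f x = 0"
    and deriv: "\<And>y t. ((\<lambda>t. f (y + t *\<^sub>R e)) has_vector_derivative h (y + t *\<^sub>R e)) (at t)"
    and M: "\<And>x. norm (h x) \<le> M"
  shows "norm (real (Suc n) *\<^sub>R (f (y + (1 / real (Suc n)) *\<^sub>R e) - f y))
    \<le> M * indicator (cball 0 (R + norm e)) y"
proof (cases "y \<in> cball 0 (R + norm e)")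
  case True
  let ?t = "1 / real (Suc n)"
  have "norm (f (y + ?t *\<^sub>R e) - f y) \<le> M * ?t"
    by (rule norm_directional_difference_le[OF deriv M]) simp
  then have "real (Suc n) * norm (f (y + ?t *\<^sub>R e) - f y) \<le> real (Suc n) * (M * ?t)"
    by (rule mult_left_mono) simp
  then show ?thesis
    using True by simp
next
  case False
  let ?t = "1 / real (Suc n)"
  have "norm y > R + norm e"
    using False by simp
  moreover have "norm (?t *\<^sub>R e) \<le> norm e"
    using mult_left_le_one_le[of "norm e" ?t] by simp
  moreover have "norm y \<le> norm (y + ?t *\<^sub>R e) + norm (?t *\<^sub>R e)"
    by (metis add_diff_cancel norm_triangle_ineq4)
  ultimately have "norm y > R" "norm (y + ?t *\<^sub>R e) > R"
    using norm_ge_zero[of e] by linarith+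
  then have "y \<notin> S" "y + ?t *\<^sub>R e \<notin> S"
    using R by (auto simp: not_le[symmetric])
  then show ?thesis
    using False vanish by simp
qed

text \<open>The difference quotients of \<open>f\<close> in direction \<open>e\<close> have integral zero by translation
  invariance of Lebesgue measure and converge dominatedly to \<open>h\<close>.\<close>

lemma integral_directional_derivative_eq_0:
  fixes f h :: "'a::euclidean_space \<Rightarrow> 'b::euclidean_space"
  assumes S: "bounded S" and f: "continuous_on UNIV f" and h: "continuous_on UNIV h"
    and vanish: "\<And>x. x \<notin> S \<Longrightarrow> f x = 0 \<and> h x = 0"
    and deriv: "\<And>y t. ((\<lambda>t. f (y + t *\<^sub>R e)) has_vector_derivative h (y + t *\<^sub>R e)) (at t)"
  shows "integral\<^sup>L lborel h = 0"
proof -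
  obtain R where R: "\<And>x. x \<in> S \<Longrightarrow> norm x \<le> R"
    using S bounded_iff by blast
  obtain M0 where "\<And>x. x \<in> S \<Longrightarrow> norm (h x) \<le> M0"
    using continuous_bounded_on_bounded[OF S h] by blast
  then have M: "norm (h x) \<le> max M0 0" for x
    using vanish[of x] by (cases "x \<in> S") (auto intro: max.coboundedI1)
  have vanish_f: "\<And>x. x \<notin> S \<Longrightarrow> f x = 0"
    using vanish by blast
  have fi: "integrable lborel f"
    by (rule integrable_continuous_vanishing_outside[OF S f vanish_f])
  define s where "s n y = real (Suc n) *\<^sub>R (f (y + (1 / real (Suc n)) *\<^sub>R e) - f y)" for n y
  have "(\<lambda>n. integral\<^sup>L lborel (s n)) \<longlonglongrightarrow> integral\<^sup>L lborel h"
  proof (rule integral_dominated_convergence)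
    show "integrable lborel (\<lambda>x. max M0 0 * indicator (cball 0 (R + norm e)) x)"
      by (intro integrable_mult_right integrable_real_indicator emeasure_bounded_finite) auto
    show "AE y in lborel. (\<lambda>n. s n y) \<longlonglongrightarrow> h y"
      using difference_quotient_tendsto[OF deriv[of _ 0, simplified]] by (simp add: s_def)
    show "AE y in lborel. norm (s n y) \<le> max M0 0 * indicator (cball 0 (R + norm e)) y" for n
      unfolding s_def by (intro AE_I2 norm_difference_quotient_le[OF R vanish_f deriv M])
    show "s n \<in> borel_measurable lborel" for n
      using fi unfolding s_def by measurable
    show "h \<in> borel_measurable lborel"
      using borel_measurable_continuous_onI[OF h] by simp
  qed
  moreover have "integral\<^sup>L lborel (s n) = 0" for n
    unfolding s_def by (rule integral_difference_eq_0[OF fi])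
  ultimately have "(\<lambda>n. 0) \<longlonglongrightarrow> integral\<^sup>L lborel h"
    by simp
  then show ?thesis
    using LIMSEQ_unique[OF tendsto_const] by metis
qed

lemma test_fun_weak_deriv:
  assumes D: "open D" "bounded D" and \<psi>: "test_fun D \<psi>"
  shows "weak_deriv D \<psi> i (pderiv_fun i \<psi>)"
  unfolding weak_deriv_def
proof (intro conjI allI impI)
  show "in_L2 D (pderiv_fun i \<psi>)"
    by (rule continuous_in_L2[OF D test_fun_pderiv_continuous[OF \<psi>]])
  fix \<eta>
  assume \<eta>: "test_fun D \<eta>"
  define h where "h x = pderiv_fun i \<psi> x * \<eta> x + \<psi> x * pderiv_fun i \<eta> x" for x
  have vanish: "\<And>x. x \<notin> D \<Longrightarrow> \<psi> x * \<eta> x = 0 \<and> h x = 0"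
    using test_fun_vanishes_outside[OF \<psi>] test_fun_vanishes_outside[OF \<eta>] by (simp add: h_def)
  have "continuous_on UNIV (\<lambda>x. \<psi> x * \<eta> x)"
    using test_fun_continuous[OF \<psi>] test_fun_continuous[OF \<eta>] by (rule continuous_on_mult)
  moreover have "continuous_on UNIV h"
    unfolding h_def using \<psi> \<eta>
    by (intro continuous_on_add continuous_on_mult test_fun_continuous test_fun_pderiv_continuous)
  moreover note vanish
  moreover have "((\<lambda>t. \<psi> (y + t *\<^sub>R axis i 1) * \<eta> (y + t *\<^sub>R axis i 1)) has_vector_derivative
      h (y + t *\<^sub>R axis i 1)) (at t)" for y t
    using has_vector_derivative_mult[OF smooth_fun_line_derivative[of \<psi> y "axis i 1" t]
        smooth_fun_line_derivative[of \<eta> y "axis i 1" t]] \<psi> \<eta>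
    unfolding h_def pderiv_fun_def test_fun_def by (simp add: add.commute)
  ultimately have "integral\<^sup>L lborel h = 0"
    by (rule integral_directional_derivative_eq_0[OF D(2)])
  moreover have "(LINT x:D|lborel. h x) = integral\<^sup>L lborel h"
    unfolding set_lebesgue_integral_def
    using vanish by (intro Bochner_Integration.integral_cong) (auto simp: indicator_def)
  moreover have "(LINT x:D|lborel. h x)
      = (LINT x:D|lborel. pderiv_fun i \<psi> x * \<eta> x) + (LINT x:D|lborel. \<psi> x * pderiv_fun i \<eta> x)"
    unfolding h_def
    using set_integrable_mult_test_fun(1)[OF D continuous_in_L2[OF D test_fun_pderiv_continuous[OF \<psi>]] \<eta>]
      set_integrable_mult_test_fun(2)[OF D continuous_in_L2[OF D test_fun_continuous[OF \<psi>]] \<eta>]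
    by (rule set_integral_add(2))
  ultimately show "(LINT x:D|lborel. \<psi> x * pderiv_fun i \<eta> x) = - (LINT x:D|lborel. pderiv_fun i \<psi> x * \<eta> x)"
    by (simp add: eq_neg_iff_add_eq_0 add.commute)
qed

section \<open>Weak derivatives and the space \<open>H\<^sup>1\<^sub>0(D)\<close>\<close>

lemma weak_deriv_in_L2: "weak_deriv D u i v \<Longrightarrow> in_L2 D v"
  unfolding weak_deriv_def by simp

lemma weak_deriv_lincomb:
  assumes D: "open D" "bounded D" and u: "in_L2 D u" and u': "in_L2 D u'"
    and v: "weak_deriv D u i v" and v': "weak_deriv D u' i v'"
  shows "weak_deriv D (\<lambda>x. a * u x + b * u' x) i (\<lambda>x. a * v x + b * v' x)"
  unfolding weak_deriv_def
proof (intro conjI allI impI)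
  show "in_L2 D (\<lambda>x. a * v x + b * v' x)"
    using v v' by (intro in_L2_lincomb weak_deriv_in_L2)
  fix \<psi>
  assume \<psi>: "test_fun D \<psi>"
  note int_u = set_integrable_mult_test_fun[OF D u \<psi>] set_integrable_mult_test_fun[OF D u' \<psi>]
  note int_v = set_integrable_mult_test_fun[OF D weak_deriv_in_L2[OF v] \<psi>]
    set_integrable_mult_test_fun[OF D weak_deriv_in_L2[OF v'] \<psi>]
  have "(LINT x:D|lborel. (a * u x + b * u' x) * pderiv_fun i \<psi> x)
      = a * (LINT x:D|lborel. u x * pderiv_fun i \<psi> x) + b * (LINT x:D|lborel. u' x * pderiv_fun i \<psi> x)"
    using set_integral_lincomb[OF int_u(2) int_u(4)] by (simp add: algebra_simps)
  also have "\<dots> = - (a * (LINT x:D|lborel. v x * \<psi> x) + b * (LINT x:D|lborel. v' x * \<psi> x))"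
    using v v' \<psi> unfolding weak_deriv_def by simp
  also have "\<dots> = - (LINT x:D|lborel. (a * v x + b * v' x) * \<psi> x)"
    using set_integral_lincomb[OF int_v(1) int_v(3)] by (simp add: algebra_simps)
  finally show "(LINT x:D|lborel. (a * u x + b * u' x) * pderiv_fun i \<psi> x)
      = - (LINT x:D|lborel. (a * v x + b * v' x) * \<psi> x)" .
qed

lemma weak_deriv_unique_AE:
  assumes D: "open D" "bounded D" and v: "weak_deriv D u i v" and v': "weak_deriv D u i v'"
  shows "AE x in lborel. x \<in> D \<longrightarrow> v x = v' x"
proof -
  note L2 = weak_deriv_in_L2[OF v] weak_deriv_in_L2[OF v']
  have "AE x in lborel. x \<in> D \<longrightarrow> v x - v' x = 0"
  proof (rule test_fun_orthogonal_imp_AE_zero[OF D(1)])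
    show "set_integrable lborel D (\<lambda>x. v x - v' x)"
      using in_L2_set_integrable[OF D L2(1)] in_L2_set_integrable[OF D L2(2)] by (rule set_integral_diff(1))
    fix \<psi>
    assume \<psi>: "test_fun D \<psi>"
    have "(LINT x:D|lborel. (v x - v' x) * \<psi> x)
        = (LINT x:D|lborel. v x * \<psi> x) - (LINT x:D|lborel. v' x * \<psi> x)"
      using set_integrable_mult_test_fun(1)[OF D L2(1) \<psi>] set_integrable_mult_test_fun(1)[OF D L2(2) \<psi>]
      by (simp add: left_diff_distrib set_integral_diff(2))
    also have "\<dots> = 0"
      using v v' \<psi> unfolding weak_deriv_def by (metis diff_self minus_equation_iff)
    finally show "(LINT x:D|lborel. (v x - v' x) * \<psi> x) = 0" .
  qed
  then show ?thesis
    by eventually_elim simp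
qed

lemma wgrad_weak_deriv: "weak_deriv D u i v \<Longrightarrow> weak_deriv D u i (wgrad D u i)"
  using someI[of "weak_deriv D u i" v] unfolding wgrad_def by blast

lemma in_H1_lincomb:
  assumes D: "open D" "bounded D" and u: "in_H1 D u" and u': "in_H1 D u'"
  shows "in_H1 D (\<lambda>x. a * u x + b * u' x)"
  unfolding in_H1_def
proof (intro conjI allI)
  have L2: "in_L2 D u" "in_L2 D u'"
    using u u' unfolding in_H1_def by simp_all
  then show "in_L2 D (\<lambda>x. a * u x + b * u' x)"
    by (rule in_L2_lincomb)
  fix i
  obtain v v' where "weak_deriv D u i v" "weak_deriv D u' i v'"
    using u u' unfolding in_H1_def by blast
  then show "\<exists>v. weak_deriv D (\<lambda>x. a * u x + b * u' x) i v"
    using weak_deriv_lincomb[OF D L2] by blast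
qed

lemma test_fun_in_H1:
  assumes "open D" "bounded D" "test_fun D \<psi>"
  shows "in_H1 D \<psi>"
  unfolding in_H1_def
  using continuous_in_L2[OF assms(1,2) test_fun_continuous[OF assms(3)]] test_fun_weak_deriv[OF assms]
  by blast

lemma in_H1_diff_test_fun:
  assumes D: "open D" "bounded D" and u: "in_H1 D u" and \<psi>: "test_fun D \<psi>"
  shows "in_H1 D (\<lambda>x. u x - \<psi> x)"
  using in_H1_lincomb[OF D u test_fun_in_H1[OF D \<psi>], of 1 "-1"] by simp

definition H1_sq_norm :: "(real^'n::finite) set \<Rightarrow> 'n cfun \<Rightarrow> real" where
  "H1_sq_norm D u = sq_norm_L2 D u + (\<Sum>i\<in>UNIV. sq_norm_L2 D (wgrad D u i))"

lemma H1norm_eq_sqrt: "H1norm D u = sqrt (H1_sq_norm D u)"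
  unfolding H1norm_def H1_sq_norm_def ..

lemma H1_sq_norm_nonneg: "0 \<le> H1_sq_norm D u"
  unfolding H1_sq_norm_def by (intro add_nonneg_nonneg sum_nonneg sq_norm_L2_nonneg)

text \<open>Since \<open>wgrad\<close> picks an arbitrary weak derivative, this bound rests on the
  uniqueness of weak derivatives almost everywhere.\<close>

lemma H1_sq_norm_lincomb_le:
  assumes D: "open D" "bounded D" and E: "in_H1 D E" and E': "in_H1 D E'"
  shows "H1_sq_norm D (\<lambda>x. a * E x + b * E' x)
    \<le> 2 * (cmod a)\<^sup>2 * H1_sq_norm D E + 2 * (cmod b)\<^sup>2 * H1_sq_norm D E'"
proof -
  let ?G = "\<lambda>x. a * E x + b * E' x"
  have L2: "in_L2 D E" "in_L2 D E'"
    using E E' unfolding in_H1_def by simp_all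
  have W: "weak_deriv D E i (wgrad D E i)" "weak_deriv D E' i (wgrad D E' i)" for i
    using E E' wgrad_weak_deriv unfolding in_H1_def by blast+
  have "sq_norm_L2 D (wgrad D ?G i)
      \<le> 2 * (cmod a)\<^sup>2 * sq_norm_L2 D (wgrad D E i) + 2 * (cmod b)\<^sup>2 * sq_norm_L2 D (wgrad D E' i)" for i
  proof -
    have WG: "weak_deriv D ?G i (\<lambda>x. a * wgrad D E i x + b * wgrad D E' i x)"
      by (rule weak_deriv_lincomb[OF D L2 W])
    have "sq_norm_L2 D (wgrad D ?G i) = sq_norm_L2 D (\<lambda>x. a * wgrad D E i x + b * wgrad D E' i x)"
      using WG wgrad_weak_deriv[OF WG] weak_deriv_unique_AE[OF D wgrad_weak_deriv[OF WG] WG]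
      by (intro sq_norm_L2_cong_AE weak_deriv_in_L2)
    also have "\<dots> \<le> 2 * (cmod a)\<^sup>2 * sq_norm_L2 D (wgrad D E i) + 2 * (cmod b)\<^sup>2 * sq_norm_L2 D (wgrad D E' i)"
      using W by (intro sq_norm_L2_lincomb_le weak_deriv_in_L2)
    finally show ?thesis .
  qed
  then have "(\<Sum>i\<in>UNIV. sq_norm_L2 D (wgrad D ?G i))
      \<le> 2 * (cmod a)\<^sup>2 * (\<Sum>i\<in>UNIV. sq_norm_L2 D (wgrad D E i))
        + 2 * (cmod b)\<^sup>2 * (\<Sum>i\<in>UNIV. sq_norm_L2 D (wgrad D E' i))"
    by (simp add: sum_distrib_left flip: sum.distrib) (rule sum_mono)
  moreover have "sq_norm_L2 D ?G \<le> 2 * (cmod a)\<^sup>2 * sq_norm_L2 D E + 2 * (cmod b)\<^sup>2 * sq_norm_L2 D E'"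
    by (rule sq_norm_L2_lincomb_le[OF L2])
  ultimately show ?thesis
    unfolding H1_sq_norm_def distrib_left by linarith
qed

lemma H10_lincomb:
  assumes D: "open D" "bounded D" and u: "u \<in> H10 D" and u': "u' \<in> H10 D"
  shows "(\<lambda>x. a * u x + b * u' x) \<in> H10 D"
proof -
  obtain \<psi> where uH: "in_H1 D u" and \<psi>: "\<And>n. test_fun D (\<psi> n)"
    and lim: "(\<lambda>n. H1norm D (\<lambda>x. u x - \<psi> n x)) \<longlonglongrightarrow> 0"
    using u unfolding H10_def by blast
  obtain \<psi>' where uH': "in_H1 D u'" and \<psi>': "\<And>n. test_fun D (\<psi>' n)"
    and lim': "(\<lambda>n. H1norm D (\<lambda>x. u' x - \<psi>' n x)) \<longlonglongrightarrow> 0"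
    using u' unfolding H10_def by blast
  let ?e = "\<lambda>n. H1norm D (\<lambda>x. u x - \<psi> n x)" and ?e' = "\<lambda>n. H1norm D (\<lambda>x. u' x - \<psi>' n x)"
  define \<eta> where "\<eta> n x = a * \<psi> n x + b * \<psi>' n x" for n x
  have bound: "H1norm D (\<lambda>x. a * u x + b * u' x - \<eta> n x)
      \<le> sqrt (2 * (cmod a)\<^sup>2 * (?e n)\<^sup>2 + 2 * (cmod b)\<^sup>2 * (?e' n)\<^sup>2)" for n
  proof -
    have "(\<lambda>x. a * u x + b * u' x - \<eta> n x) = (\<lambda>x. a * (u x - \<psi> n x) + b * (u' x - \<psi>' n x))"
      unfolding \<eta>_def by (simp add: algebra_simps)
    then have "H1_sq_norm D (\<lambda>x. a * u x + b * u' x - \<eta> n x)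
        \<le> 2 * (cmod a)\<^sup>2 * H1_sq_norm D (\<lambda>x. u x - \<psi> n x) + 2 * (cmod b)\<^sup>2 * H1_sq_norm D (\<lambda>x. u' x - \<psi>' n x)"
      using H1_sq_norm_lincomb_le[OF D in_H1_diff_test_fun[OF D uH \<psi>] in_H1_diff_test_fun[OF D uH' \<psi>']]
      by simp
    then show ?thesis
      unfolding H1norm_eq_sqrt by (simp add: H1_sq_norm_nonneg)
  qed
  have "(\<lambda>n. sqrt (2 * (cmod a)\<^sup>2 * (?e n)\<^sup>2 + 2 * (cmod b)\<^sup>2 * (?e' n)\<^sup>2))
      \<longlonglongrightarrow> sqrt (2 * (cmod a)\<^sup>2 * 0\<^sup>2 + 2 * (cmod b)\<^sup>2 * 0\<^sup>2)"
    by (intro tendsto_intros lim lim')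
  then have lim0: "(\<lambda>n. sqrt (2 * (cmod a)\<^sup>2 * (?e n)\<^sup>2 + 2 * (cmod b)\<^sup>2 * (?e' n)\<^sup>2)) \<longlonglongrightarrow> 0"
    by simp
  have "(\<lambda>n. H1norm D (\<lambda>x. a * u x + b * u' x - \<eta> n x)) \<longlonglongrightarrow> 0"
  proof (rule real_tendsto_sandwich[OF _ _ tendsto_const lim0])
    show "\<forall>\<^sub>F n in sequentially. 0 \<le> H1norm D (\<lambda>x. a * u x + b * u' x - \<eta> n x)"
      by (simp add: H1norm_eq_sqrt H1_sq_norm_nonneg)
  qed (use bound in simp)
  moreover have "test_fun D (\<eta> n)" for n
    unfolding \<eta>_def using \<psi> \<psi>' by (rule test_fun_lincomb)
  ultimately show ?thesis
    unfolding H10_def using in_H1_lincomb[OF D uH uH'] by blast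
qed

lemma H10_in_L2: "u \<in> H10 D \<Longrightarrow> in_L2 D u"
  unfolding H10_def in_H1_def by auto

lemma H10_mult:
  assumes "open D" "bounded D" "u \<in> H10 D"
  shows "(\<lambda>x. c * u x) \<in> H10 D"
  using H10_lincomb[OF assms assms(3), of c 0] by simp

lemma H10_zero:
  assumes "open D" "bounded D" "u \<in> H10 D"
  shows "(\<lambda>x. 0) \<in> H10 D"
  using H10_mult[OF assms, of 0] by simp

lemma L2ip_mult_left: "L2ip D (\<lambda>x. c * u x) z = c * L2ip D u z"
  unfolding L2ip_def by (simp add: mult.assoc set_integral_mult_right)

lemma L2ip_self: "L2ip D u u = complex_of_real (sq_norm_L2 D u)"
proof -
  have "L2ip D u u = (LINT x:D|lborel. complex_of_real ((cmod (u x))\<^sup>2))"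
    unfolding L2ip_def by (simp only: complex_norm_square)
  also have "\<dots> = complex_of_real (sq_norm_L2 D u)"
    unfolding sq_norm_L2_def by (rule set_integral_complex_of_real)
  finally show ?thesis .
qed

lemma L2ip_swap: "L2ip D z u = cnj (L2ip D u z)"
proof -
  have "cnj (L2ip D u z) = integral\<^sup>L lborel (\<lambda>x. cnj (indicator D x *\<^sub>R (u x * cnj (z x))))"
    unfolding L2ip_def set_lebesgue_integral_def by (simp only: Bochner_Integration.integral_cnj)
  also have "\<dots> = L2ip D z u"
    unfolding L2ip_def set_lebesgue_integral_def
    by (rule Bochner_Integration.integral_cong) (auto simp: indicator_def mult.commute)
  finally show ?thesis
    by simp
qed

lemma L2ip_real_lincomb_right:
  assumes "in_L2 D u" "in_L2 D z" "in_L2 D w"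
  shows "L2ip D u (\<lambda>x. complex_of_real \<alpha> * z x + complex_of_real \<beta> * w x)
    = complex_of_real \<alpha> * L2ip D u z + complex_of_real \<beta> * L2ip D u w"
proof -
  have "L2ip D u (\<lambda>x. complex_of_real \<alpha> * z x + complex_of_real \<beta> * w x)
      = (LINT x:D|lborel. complex_of_real \<alpha> * (u x * cnj (z x)) + complex_of_real \<beta> * (u x * cnj (w x)))"
    unfolding L2ip_def by (simp add: algebra_simps)
  also have "\<dots> = complex_of_real \<alpha> * L2ip D u z + complex_of_real \<beta> * L2ip D u w"
    unfolding L2ip_def using assms by (intro set_integral_lincomb set_integrable_mult_cnj)
  finally show ?thesis .
qed

lemma L2ip_eq_0_iff:
  "L2ip D \<phi> z = 0 \<longleftrightarrow> Re (L2ip D z \<phi>) = 0 \<and> Re (L2ip D (\<lambda>x. \<i> * \<phi> x) z) = 0"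
  unfolding L2ip_mult_left L2ip_swap[of D z] by (simp add: complex_eq_iff)

section \<open>Horizontal spaces\<close>

lemma tangentOB_eq:
  "tangentOB D p \<phi> = {\<xi>. (\<forall>k<p. \<xi> k \<in> tangentS D (\<phi> k)) \<and> (\<forall>k\<ge>p. \<xi> k = (\<lambda>x. 0))}"
  unfolding tangentOB_def Hp_def tangentS_def by auto

lemma horizontal_L_eq:
  "horizontal_L D p \<phi> = {\<xi>. (\<forall>k<p. \<xi> k \<in> tangentS D (\<phi> k) \<and> Re (L2ip D (\<lambda>x. \<i> * \<phi> k x) (\<xi> k)) = 0)
     \<and> (\<forall>k\<ge>p. \<xi> k = (\<lambda>x. 0))}"
  unfolding horizontal_L_def Hp_def tangentS_def L2ip_eq_0_iff by auto

lemma weighted_sums_eq_0_iff: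
  fixes p :: nat and c :: "nat \<Rightarrow> real"
  shows "(\<forall>\<sigma>. (\<Sum>k<p. \<sigma> k * c k) = 0) \<longleftrightarrow> (\<forall>k<p. c k = 0)"
proof safe
  fix k
  assume all: "\<forall>\<sigma>. (\<Sum>k<p. \<sigma> k * c k) = 0" and k: "k < p"
  have "(\<Sum>m<p. (if m = k then 1 else 0) * c m) = 0"
    using spec[OF all, of "\<lambda>m. if m = k then 1 else 0"] .
  moreover have "(\<Sum>m<p. (if m = k then 1 else 0) * c m) = (\<Sum>m<p. if m = k then c m else 0)"
    by (intro sum.cong) auto
  ultimately show "c k = 0"
    using k by simp
qed simp

lemma componentwise_subsets_eq_iff:
  fixes p :: nat
  assumes "\<And>k. k < p \<Longrightarrow> z0 \<in> S k \<and> P k z0 \<and> Q k z0"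
  shows "{\<xi>. (\<forall>k<p. \<xi> k \<in> S k \<and> P k (\<xi> k)) \<and> (\<forall>k\<ge>p. \<xi> k = z0)}
       = {\<xi>. (\<forall>k<p. \<xi> k \<in> S k \<and> Q k (\<xi> k)) \<and> (\<forall>k\<ge>p. \<xi> k = z0)}
     \<longleftrightarrow> (\<forall>k<p. \<forall>z\<in>S k. P k z \<longleftrightarrow> Q k z)"
    (is "?A = ?B \<longleftrightarrow> _")
proof
  assume eq: "?A = ?B"
  show "\<forall>k<p. \<forall>z\<in>S k. P k z \<longleftrightarrow> Q k z"
  proof (intro allI impI ballI)
    fix k z
    assume k: "k < p" and z: "z \<in> S k"
    let ?\<xi> = "\<lambda>m. if m = k then z else z0"
    have "\<forall>m\<ge>p. ?\<xi> m = z0"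
      using k by auto
    then have "?\<xi> \<in> ?A \<longleftrightarrow> P k z" "?\<xi> \<in> ?B \<longleftrightarrow> Q k z"
      using assms k z by auto
    then show "P k z \<longleftrightarrow> Q k z"
      using eq by simp
  qed
qed auto

definition single_comp :: "nat \<Rightarrow> 'n cfun \<Rightarrow> nat \<Rightarrow> 'n cfun" where
  "single_comp j z = (\<lambda>k. if k = j then z else (\<lambda>x. 0))"

locale product_metric_at =
  fixes D :: "(real^'n::finite) set" and p :: nat and N :: "nat \<Rightarrow> real"
    and \<phi> :: "nat \<Rightarrow> 'n cfun" and Gp :: "nat \<Rightarrow> 'n cfun \<Rightarrow> 'n cfun \<Rightarrow> real"
  assumes open_D: "open D" and bounded_D: "bounded D"
    and N_pos: "\<And>j. j < p \<Longrightarrow> N j > 0"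
    and \<phi>_OB: "\<phi> \<in> OB D p N"
    and product_metric: "is_product_metric D p \<phi> Gp"
begin

abbreviation i\<phi> :: "nat \<Rightarrow> 'n cfun" where
  "i\<phi> j \<equiv> (\<lambda>x. \<i> * \<phi> j x)"

lemma \<phi>_H10: "j < p \<Longrightarrow> \<phi> j \<in> H10 D"
  using \<phi>_OB unfolding OB_def Hp_def by auto

lemma sq_norm_\<phi>: "j < p \<Longrightarrow> sq_norm_L2 D (\<phi> j) = N j"
  using \<phi>_OB unfolding OB_def sphereS_def by auto

lemma sq_norm_i\<phi>: "j < p \<Longrightarrow> sq_norm_L2 D (i\<phi> j) = N j"
  using sq_norm_\<phi> by (simp add: sq_norm_L2_def norm_mult)

lemma L2ip_\<phi>_\<phi>: "j < p \<Longrightarrow> L2ip D (\<phi> j) (\<phi> j) = complex_of_real (N j)"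
  by (simp add: L2ip_self sq_norm_\<phi>)

lemma zero_H10: "j < p \<Longrightarrow> (\<lambda>x. 0) \<in> H10 D"
  using H10_zero[OF open_D bounded_D \<phi>_H10] .

lemma i\<phi>_H10: "j < p \<Longrightarrow> i\<phi> j \<in> H10 D"
  using H10_mult[OF open_D bounded_D \<phi>_H10] .

lemma zero_tangent: "j < p \<Longrightarrow> (\<lambda>x. 0) \<in> tangentS D (\<phi> j)"
  unfolding tangentS_def L2ip_def using zero_H10 by (simp add: set_lebesgue_integral_def)

lemma i\<phi>_tangent: "j < p \<Longrightarrow> i\<phi> j \<in> tangentS D (\<phi> j)"
  unfolding tangentS_def using i\<phi>_H10 by (simp add: L2ip_mult_left L2ip_\<phi>_\<phi>)

lemma L2ip_i\<phi>_i\<phi>: "j < p \<Longrightarrow> L2ip D (i\<phi> j) (i\<phi> j) = complex_of_real (N j)"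
  by (simp only: L2ip_self sq_norm_i\<phi>)

lemma Gp_linear: "j < p \<Longrightarrow> H10_to_Hm1_linear D (Gp j)"
  using product_metric unfolding is_product_metric_def by blast

lemma Gp_linear_left:
  assumes "j < p" "y \<in> H10 D" "y' \<in> H10 D" "z \<in> H10 D"
  shows "Gp j (\<lambda>x. complex_of_real a * y x + complex_of_real b * y' x) z = a * Gp j y z + b * Gp j y' z"
proof -
  have "\<forall>y\<in>H10 D. \<forall>y'\<in>H10 D. \<forall>a b::real. \<forall>z\<in>H10 D.
      Gp j (\<lambda>x. a * y x + b * y' x) z = a * Gp j y z + b * Gp j y' z"
    using Gp_linear[OF assms(1)] unfolding H10_to_Hm1_linear_def by (rule conjunct1)
  then show ?thesis
    using assms(2-4) by blast
qed

lemma Gp_linear_right: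
  assumes "j < p" "y \<in> H10 D" "z \<in> H10 D" "z' \<in> H10 D"
  shows "Gp j y (\<lambda>x. complex_of_real a * z x + complex_of_real b * z' x) = a * Gp j y z + b * Gp j y z'"
proof -
  have "\<forall>y\<in>H10 D. \<forall>z\<in>H10 D. \<forall>z'\<in>H10 D. \<forall>a b::real.
      Gp j y (\<lambda>x. a * z x + b * z' x) = a * Gp j y z + b * Gp j y z'"
    using Gp_linear[OF assms(1)] unfolding H10_to_Hm1_linear_def by blast
  then show ?thesis
    using assms(2-4) by blast
qed

lemma Gp_zero_left:
  assumes "j < p" "z \<in> H10 D"
  shows "Gp j (\<lambda>x. 0) z = 0"
  using Gp_linear_left[OF assms(1) zero_H10[OF assms(1)] zero_H10[OF assms(1)] assms(2), of 0 0] by simp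

lemma Gp_zero_right:
  assumes "j < p" "y \<in> H10 D"
  shows "Gp j y (\<lambda>x. 0) = 0"
  using Gp_linear_right[OF assms zero_H10[OF assms(1)] zero_H10[OF assms(1)], of 0 0] by simp

lemma prod_metric_single_comp:
  assumes "j < p" "y \<in> H10 D" "z \<in> H10 D"
  shows "prod_metric p Gp (single_comp j y) (single_comp j z) = Gp j y z"
proof -
  have "prod_metric p Gp (single_comp j y) (single_comp j z)
      = Gp j y z + (\<Sum>k\<in>{..<p} - {j}. Gp k (\<lambda>x. 0) (\<lambda>x. 0))"
    unfolding prod_metric_def single_comp_def using assms(1) by (subst sum.remove[of _ j]) auto
  also have "(\<Sum>k\<in>{..<p} - {j}. Gp k (\<lambda>x. 0) (\<lambda>x. 0)) = 0"
    using Gp_zero_left zero_H10 by (intro sum.neutral) auto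
  finally show ?thesis
    by simp
qed

lemma single_comp_tangentOB:
  "j < p \<Longrightarrow> z \<in> tangentS D (\<phi> j) \<Longrightarrow> single_comp j z \<in> tangentOB D p \<phi>"
  unfolding tangentOB_eq single_comp_def using zero_tangent by auto

lemma Gp_i\<phi>_sym:
  assumes j: "j < p" and z: "z \<in> tangentS D (\<phi> j)"
  shows "Gp j z (i\<phi> j) = Gp j (i\<phi> j) z"
proof -
  have "z \<in> H10 D"
    using z unfolding tangentS_def by simp
  moreover have "prod_metric p Gp (single_comp j z) (single_comp j (i\<phi> j))
      = prod_metric p Gp (single_comp j (i\<phi> j)) (single_comp j z)"
    using product_metric single_comp_tangentOB[OF j z] single_comp_tangentOB[OF j i\<phi>_tangent[OF j]]
    unfolding is_product_metric_def by blast
  ultimately show ?thesis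
    using j i\<phi>_H10[OF j] by (simp add: prod_metric_single_comp)
qed

lemma Gp_i\<phi>_pos:
  assumes j: "j < p"
  shows "Gp j (i\<phi> j) (i\<phi> j) > 0"
proof -
  have "sq_norm_L2 D (single_comp j (i\<phi> j) j) \<noteq> 0"
    using sq_norm_i\<phi>[OF j] N_pos[OF j] by (simp add: single_comp_def)
  then have "prod_metric p Gp (single_comp j (i\<phi> j)) (single_comp j (i\<phi> j)) > 0"
    using product_metric single_comp_tangentOB[OF j i\<phi>_tangent[OF j]] j
    unfolding is_product_metric_def by blast
  then show ?thesis
    using j i\<phi>_H10[OF j] by (simp add: prod_metric_single_comp)
qed

text \<open>Vertical vectors are \<open>(i \<phi>\<^sub>k \<sigma>\<^sub>k)\<^sub>k\<close>, so g-orthogonality to all of them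
  decouples into one condition per component.\<close>

lemma horizontal_g_eq:
  "horizontal_g D p \<phi> Gp = {\<xi>. (\<forall>k<p. \<xi> k \<in> tangentS D (\<phi> k) \<and> Gp k (i\<phi> k) (\<xi> k) = 0)
     \<and> (\<forall>k\<ge>p. \<xi> k = (\<lambda>x. 0))}"
proof -
  have "prod_metric p Gp \<xi> (\<lambda>k. if k < p then (\<lambda>x. \<i> * \<phi> k x * complex_of_real (\<sigma> k)) else (\<lambda>x. 0))
      = (\<Sum>k<p. \<sigma> k * Gp k (i\<phi> k) (\<xi> k))" if "\<xi> \<in> tangentOB D p \<phi>" for \<xi> \<sigma>
    unfolding prod_metric_def
  proof (rule sum.cong[OF refl])
    fix k
    assume k: "k \<in> {..<p}"
    then have T: "\<xi> k \<in> tangentS D (\<phi> k)"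
      using that unfolding tangentOB_eq by simp
    have "Gp k (\<xi> k) (\<lambda>x. complex_of_real (\<sigma> k) * i\<phi> k x + complex_of_real 0 * i\<phi> k x)
        = \<sigma> k * Gp k (\<xi> k) (i\<phi> k)"
      using k T i\<phi>_H10 unfolding tangentS_def by (subst Gp_linear_right) auto
    then show "Gp k (\<xi> k) (if k < p then (\<lambda>x. \<i> * \<phi> k x * complex_of_real (\<sigma> k)) else (\<lambda>x. 0))
        = \<sigma> k * Gp k (i\<phi> k) (\<xi> k)"
      using k T by (simp add: Gp_i\<phi>_sym mult.commute mult.left_commute)
  qed
  then have "horizontal_g D p \<phi> Gp = {\<xi> \<in> tangentOB D p \<phi>. \<forall>k<p. Gp k (i\<phi> k) (\<xi> k) = 0}"
    unfolding horizontal_g_def vertical_def by (auto simp: weighted_sums_eq_0_iff[symmetric])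
  then show ?thesis
    unfolding tangentOB_eq by auto
qed

lemma horizontal_g_eq_L_iff:
  "horizontal_g D p \<phi> Gp = horizontal_L D p \<phi> \<longleftrightarrow>
     (\<forall>j<p. \<forall>z\<in>tangentS D (\<phi> j). Gp j (i\<phi> j) z = 0 \<longleftrightarrow> Re (L2ip D (i\<phi> j) z) = 0)"
  unfolding horizontal_g_eq horizontal_L_eq
  using zero_tangent i\<phi>_H10 by (intro componentwise_subsets_eq_iff) (simp add: Gp_zero_right L2ip_def)

text \<open>Subtracting the right multiple of \<open>i \<phi>\<^sub>j\<close> moves any tangent vector into the
  common kernel.\<close>

lemma kernels_eq_iff_proportional:
  assumes j: "j < p"
  shows "(\<forall>z\<in>tangentS D (\<phi> j). Gp j (i\<phi> j) z = 0 \<longleftrightarrow> Re (L2ip D (i\<phi> j) z) = 0) \<longleftrightarrow>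
    (\<exists>s. s \<noteq> 0 \<and> (\<forall>z\<in>tangentS D (\<phi> j). Gp j (i\<phi> j) z = s * Re (L2ip D (i\<phi> j) z)))"
proof
  assume kernels: "\<forall>z\<in>tangentS D (\<phi> j). Gp j (i\<phi> j) z = 0 \<longleftrightarrow> Re (L2ip D (i\<phi> j) z) = 0"
  define s where "s = Gp j (i\<phi> j) (i\<phi> j) / N j"
  have "Gp j (i\<phi> j) z = s * Re (L2ip D (i\<phi> j) z)" if z: "z \<in> tangentS D (\<phi> j)" for z
  proof -
    have zH: "z \<in> H10 D" and zT: "Re (L2ip D z (\<phi> j)) = 0"
      using z unfolding tangentS_def by auto
    define t where "t = Re (L2ip D (i\<phi> j) z) / N j"
    define z' where "z' = (\<lambda>x. complex_of_real 1 * z x + complex_of_real (- t) * i\<phi> j x)"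
    have z'H: "z' \<in> H10 D"
      unfolding z'_def using open_D bounded_D zH i\<phi>_H10[OF j] by (rule H10_lincomb)
    have L2: "in_L2 D z" "in_L2 D (\<phi> j)" "in_L2 D (i\<phi> j)"
      using zH \<phi>_H10[OF j] i\<phi>_H10[OF j] by (simp_all add: H10_in_L2)
    have "L2ip D (\<phi> j) (i\<phi> j) = cnj (L2ip D (i\<phi> j) (\<phi> j))"
      by (rule L2ip_swap)
    also have "\<dots> = - \<i> * complex_of_real (N j)"
      by (simp add: L2ip_mult_left L2ip_\<phi>_\<phi>[OF j])
    finally have "Re (L2ip D (\<phi> j) z') = Re (L2ip D (\<phi> j) z)"
      unfolding z'_def L2ip_real_lincomb_right[OF L2(2,1,3)] by simp
    then have "Re (L2ip D z' (\<phi> j)) = 0"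
      using zT by (simp add: L2ip_swap[of D z' "\<phi> j"] L2ip_swap[of D z "\<phi> j"])
    moreover have "Re (L2ip D (i\<phi> j) z') = 0"
      unfolding z'_def L2ip_real_lincomb_right[OF L2(3,1,3)]
      using N_pos[OF j] by (simp add: t_def L2ip_i\<phi>_i\<phi>[OF j])
    ultimately have "Gp j (i\<phi> j) z' = 0"
      using kernels z'H unfolding tangentS_def by blast
    moreover have "Gp j (i\<phi> j) z' = Gp j (i\<phi> j) z - t * Gp j (i\<phi> j) (i\<phi> j)"
      unfolding z'_def using j i\<phi>_H10[OF j] zH by (subst Gp_linear_right) auto
    ultimately show ?thesis
      using N_pos[OF j] by (simp add: s_def t_def)
  qed
  moreover have "s \<noteq> 0"
    unfolding s_def using Gp_i\<phi>_pos[OF j] N_pos[OF j] by simp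
  ultimately show "\<exists>s. s \<noteq> 0 \<and> (\<forall>z\<in>tangentS D (\<phi> j). Gp j (i\<phi> j) z = s * Re (L2ip D (i\<phi> j) z))"
    by blast
qed auto

end

theorem proposition4p3:
  fixes D :: "(real^'n::finite) set" and p :: nat and N :: "nat \<Rightarrow> real"
    and \<phi> :: "nat \<Rightarrow> 'n cfun" and Gp :: "nat \<Rightarrow> 'n cfun \<Rightarrow> 'n cfun \<Rightarrow> real"
  assumes "CARD('n) = 2 \<or> CARD('n) = 3"
    and "lipschitz_domain D"
    and "p \<ge> 1"
    and "\<forall>j<p. N j > 0"
    and "\<phi> \<in> OB D p N"
    and "is_product_metric D p \<phi> Gp"
  shows "horizontal_g D p \<phi> Gp = horizontal_L D p \<phi> \<longleftrightarrow>
     (\<forall>j<p. \<exists>s::real. s \<noteq> 0 \<and>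
        (\<forall>z\<in>tangentS D (\<phi> j).
           Gp j (\<lambda>x. \<i> * \<phi> j x) z = s * Re (L2ip D (\<lambda>x. \<i> * \<phi> j x) z)))"
proof -
  interpret product_metric_at D p N \<phi> Gp
    using assms(2,4-6) unfolding lipschitz_domain_def by unfold_locales auto
  show ?thesis
    unfolding horizontal_g_eq_L_iff using kernels_eq_iff_proportional by blast
qed

end
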